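(* For each $\vec a\in\mathcal M$, the multiplication $\vec\xi_1\circ\vec\xi_2=\eta\big(\eta^{-1}(\vec\xi_1)\circ\eta^{-1}(\vec\xi_2)\big)$ on $T_{\vec a}\mathcal M$ is commutative, associative, and invariant with respect to the metric $\langle\,,\rangle_\eta$, i.e. $\langle\vec\xi_1\circ\vec\xi_2,\vec\xi_3\rangle_\eta=\langle\vec\xi_1,\vec\xi_2\circ\vec\xi_3\rangle_\eta$.
   Context: Fix $m\ge1$, positive integers $n_0,\dots,n_m$, nonzero integers $d_1,\dots,d_m$; $D_1,\dots,D_m\subset\mathbb C$ pairwise disjoint closed disks, $\gamma_i=\partial D_i$ positively oriented, $\mathbf D^{int}=\bigcup(D_i\setminus\gamma_i)$, $\mathbf D^{ext}=\mathbb P^1\setminus\bigcup D_i$; $\mathcal H$ = germs of functions holomorphic near $\bigcup\gamma_i$; $f=f_++f_-$ with $f_+(z)=\frac1{2\pi\mathrm i}\sum_s\oint_{\gamma_s}\frac{f(p)}{p-z}dp$ ($z\in\mathbf D^{int}$), $f_-(z)=-\frac1{2\pi\mathrm i}\sum_s\oint_{\gamma_s}\frac{f(p)}{p-z}dp$ ($z\in\mathbf D^{ext}$), $f_-(\infty)=0$. $\mathcal M$: pairs $\vec a=(a,\hat a)\in\mathcal H\times\mathcal H$ with $a$ meromorphic on $\mathbf D^{ext}$, only pole $\infty$, $a=z^{n_0}+a_{n_0-2}z^{n_0-2}+\cdots$; $\hat a$ meromorphic on $\mathbf D^{int}$, only poles $\varphi_j\in D_j\setminus\gamma_j$, $\hat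 a=\hat a_{j,-n_j}(z-\varphi_j)^{-n_j}+\cdots$, $\hat a_{j,-n_j}\ne0$; $\zeta=a-\hat a=w_j^{d_j}$ on $\gamma_j$ with $w_j$ holomorphic near $\gamma_j$, $w_j'\ne0$, $w_j(\gamma_j)$ winding once about $0$. Tangent vectors $X\leftrightarrow(\partial_Xa,\partial_X\hat a)$; $\ell=a_++\hat a_-$; $'=\partial_z$. Metric $\langle X_1,X_2\rangle_\eta=-\frac1{2\pi\mathrm i}\sum_j\oint_{\gamma_j}\frac{\partial_1\zeta\partial_2\zeta}{\zeta'}dz-(\operatorname{Res}_\infty+\sum_j\operatorname{Res}_{\varphi_j})\frac{\partial_1\ell\partial_2\ell}{\ell'}dz$. The linear map $\eta:\mathcal H\times\mathcal H\to T_{\vec a}\mathcal M$ is $\eta(\omega,\hat\omega)=(a'(\omega+\hat\omega)_--(\omega a'+\hat\omega\hat a')_-,\,-\hat a'(\omega+\hat\omega)_++(\omega a'+\hat\omega\hat a')_+)$ (it is surjective), and the cotangent space is $T^*_{\vec a}\mathcal M=(\mathcal H\times\mathcal H)/\ker\eta$, so $\eta^{-1}:T_{\vec a}\mathcal M\to T^*_{\vec a}\mathcal M$. The product on $T^*_{\vec a}\mathcal M$ is induced from the product on $\mathcal H\times\mathcal H$: $(\omega_1,\hat\omega_1)\circ(\omega_2,\hat\omega_2)=(\omega_2(\omega_1a')_+-\omega_1(\omega_2a')_--\omega_2(\hat\omega_1\hat a')_--\omega_1(\hat\omega_2\hat a')_-,\ \hat\omega_2(\hat\omega_1\hat a')_+-\hat\omega_1(\hat\omega_2\hat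 a')_-+\hat\omega_1(\omega_2a')_++\hat\omega_2(\omega_1a')_+)$, which is well defined on the quotient. *)

theory Defs
  imports "HOL-Complex_Analysis.Complex_Analysis"
begin

definition circles :: "(nat \<Rightarrow> complex) \<Rightarrow> (nat \<Rightarrow> real) \<Rightarrow> nat \<Rightarrow> complex set" where
  "circles c r m = (\<Union>j\<in>{1..m}. sphere (c j) (r j))"

definition Dint :: "(nat \<Rightarrow> complex) \<Rightarrow> (nat \<Rightarrow> real) \<Rightarrow> nat \<Rightarrow> complex set" where
  "Dint c r m = (\<Union>j\<in>{1..m}. ball (c j) (r j))"

text \<open>Finite part of D^ext (the point at infinity is handled via growth conditions / residue at infinity).\<close>
definition Dext :: "(nat \<Rightarrow> complex) \<Rightarrow> (nat \<Rightarrow> real) \<Rightarrow> nat \<Rightarrow> complex set" where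
  "Dext c r m = - (\<Union>j\<in>{1..m}. cball (c j) (r j))"

text \<open>The space H of germs of functions holomorphic near the circles (represented by functions).\<close>
definition Hgerm :: "(nat \<Rightarrow> complex) \<Rightarrow> (nat \<Rightarrow> real) \<Rightarrow> nat \<Rightarrow> (complex \<Rightarrow> complex) set" where
  "Hgerm c r m = {f. \<exists>U. open U \<and> circles c r m \<subseteq> U \<and> f holomorphic_on U}"

text \<open>Equality of germs near the circles (values on the circles themselves are ignored).\<close>
definition germ_eq :: "(nat \<Rightarrow> complex) \<Rightarrow> (nat \<Rightarrow> real) \<Rightarrow> nat \<Rightarrow> (complex \<Rightarrow> complex) \<Rightarrow> (complex \<Rightarrow> complex) \<Rightarrow> bool" where
  "germ_eq c r m f g \<longleftrightarrow>
     (\<exists>U. open U \<and> circles c r m \<subseteq> U \<and> (\<forall>z\<in>U - circles c r m. f z = g z))"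

definition germ_eq2 :: "(nat \<Rightarrow> complex) \<Rightarrow> (nat \<Rightarrow> real) \<Rightarrow> nat \<Rightarrow>
    (complex \<Rightarrow> complex) \<times> (complex \<Rightarrow> complex) \<Rightarrow> (complex \<Rightarrow> complex) \<times> (complex \<Rightarrow> complex) \<Rightarrow> bool" where
  "germ_eq2 c r m X Y \<longleftrightarrow> germ_eq c r m (fst X) (fst Y) \<and> germ_eq c r m (snd X) (snd Y)"

definition cauchy_sum :: "(nat \<Rightarrow> complex) \<Rightarrow> (nat \<Rightarrow> real) \<Rightarrow> nat \<Rightarrow> (complex \<Rightarrow> complex) \<Rightarrow> complex \<Rightarrow> complex" where
  "cauchy_sum c r m f z =
     (1 / (2 * pi * \<i>)) * (\<Sum>s\<in>{1..m}. contour_integral (circlepath (c s) (r s)) (\<lambda>p. f p / (p - z)))"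

definition fill_circles :: "(nat \<Rightarrow> complex) \<Rightarrow> (nat \<Rightarrow> real) \<Rightarrow> nat \<Rightarrow> (complex \<Rightarrow> complex) \<Rightarrow> complex \<Rightarrow> complex" where
  "fill_circles c r m g z =
     (if z \<in> circles c r m then Lim (at z within - circles c r m) g else g z)"

text \<open>f_+ : equals the paper's Cauchy integral on D^int; on D^ext it is its holomorphic
  continuation f - f_- (jump relation), which is the germ of f_+ near the circles
  (and the global continuation whenever f is holomorphic on D^ext).\<close>
definition plus_part :: "(nat \<Rightarrow> complex) \<Rightarrow> (nat \<Rightarrow> real) \<Rightarrow> nat \<Rightarrow> (complex \<Rightarrow> complex) \<Rightarrow> complex \<Rightarrow> complex" where
  "plus_part c r m f = fill_circles c r m
     (\<lambda>z. cauchy_sum c r m f z + (if z \<in> Dext c r m then f z else 0))"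

text \<open>f_- : equals the paper's -(Cauchy integral) on D^ext; on D^int it is f - f_+.\<close>
definition minus_part :: "(nat \<Rightarrow> complex) \<Rightarrow> (nat \<Rightarrow> real) \<Rightarrow> nat \<Rightarrow> (complex \<Rightarrow> complex) \<Rightarrow> complex \<Rightarrow> complex" where
  "minus_part c r m f = fill_circles c r m
     (\<lambda>z. - cauchy_sum c r m f z + (if z \<in> Dint c r m then f z else 0))"

text \<open>Membership of (a, ah) in M, with the poles phi j of ah made explicit.\<close>
definition inM :: "(nat \<Rightarrow> complex) \<Rightarrow> (nat \<Rightarrow> real) \<Rightarrow> nat \<Rightarrow> (nat \<Rightarrow> nat) \<Rightarrow> (nat \<Rightarrow> int) \<Rightarrow>
    (complex \<Rightarrow> complex) \<Rightarrow> (complex \<Rightarrow> complex) \<Rightarrow> (nat \<Rightarrow> complex) \<Rightarrow> bool" where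
  "inM c r m n d a ah phi \<longleftrightarrow>
     (\<exists>U. open U \<and> circles c r m \<subseteq> U \<and>
          a holomorphic_on (U \<union> Dext c r m) \<and>
          ah holomorphic_on ((U \<union> Dint c r m) - phi ` {1..m})) \<and>
     (\<exists>C. eventually (\<lambda>z. norm (a z - z ^ n 0) \<le> C * norm z powr (real (n 0) - 2)) at_infinity) \<and>
     (\<forall>j\<in>{1..m}. phi j \<in> ball (c j) (r j)) \<and>
     (\<forall>j\<in>{1..m}. \<exists>L. L \<noteq> 0 \<and> ((\<lambda>z. (z - phi j) ^ n j * ah z) \<longlongrightarrow> L) (at (phi j))) \<and>
     (\<forall>j\<in>{1..m}. \<exists>w V. open V \<and> sphere (c j) (r j) \<subseteq> V \<and> w holomorphic_on V \<and>
          (\<forall>z\<in>V. deriv w z \<noteq> 0 \<and> w z \<noteq> 0 \<and> a z - ah z = w z powi d j) \<and>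
          winding_number (w \<circ> circlepath (c j) (r j)) 0 = 1)"

definition eta :: "(nat \<Rightarrow> complex) \<Rightarrow> (nat \<Rightarrow> real) \<Rightarrow> nat \<Rightarrow>
    (complex \<Rightarrow> complex) \<Rightarrow> (complex \<Rightarrow> complex) \<Rightarrow>
    (complex \<Rightarrow> complex) \<times> (complex \<Rightarrow> complex) \<Rightarrow> (complex \<Rightarrow> complex) \<times> (complex \<Rightarrow> complex)" where
  "eta c r m a ah om =
     (let w = fst om; wh = snd om;
          s = (\<lambda>z. w z + wh z);
          t = (\<lambda>z. w z * deriv a z + wh z * deriv ah z)
      in (\<lambda>z. deriv a z * minus_part c r m s z - minus_part c r m t z,
          \<lambda>z. - deriv ah z * plus_part c r m s z + plus_part c r m t z))"

definition prodH :: "(nat \<Rightarrow> complex) \<Rightarrow> (nat \<Rightarrow> real) \<Rightarrow> nat \<Rightarrow>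
    (complex \<Rightarrow> complex) \<Rightarrow> (complex \<Rightarrow> complex) \<Rightarrow>
    (complex \<Rightarrow> complex) \<times> (complex \<Rightarrow> complex) \<Rightarrow>
    (complex \<Rightarrow> complex) \<times> (complex \<Rightarrow> complex) \<Rightarrow> (complex \<Rightarrow> complex) \<times> (complex \<Rightarrow> complex)" where
  "prodH c r m a ah X Y =
     (let w1 = fst X; wh1 = snd X; w2 = fst Y; wh2 = snd Y;
          P = plus_part c r m; N = minus_part c r m;
          w1a = (\<lambda>z. w1 z * deriv a z); w2a = (\<lambda>z. w2 z * deriv a z);
          wh1a = (\<lambda>z. wh1 z * deriv ah z); wh2a = (\<lambda>z. wh2 z * deriv ah z)
      in (\<lambda>z. w2 z * P w1a z - w1 z * N w2a z - w2 z * N wh1a z - w1 z * N wh2a z,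
          \<lambda>z. wh2 z * P wh1a z - wh1 z * N wh2a z + wh1 z * P w2a z + wh2 z * P w1a z))"

definition residue_inf :: "(complex \<Rightarrow> complex) \<Rightarrow> complex" where
  "residue_inf F = - residue (\<lambda>w. F (1 / w) / w ^ 2) 0"

definition metric_eta :: "(nat \<Rightarrow> complex) \<Rightarrow> (nat \<Rightarrow> real) \<Rightarrow> nat \<Rightarrow>
    (complex \<Rightarrow> complex) \<Rightarrow> (complex \<Rightarrow> complex) \<Rightarrow> (nat \<Rightarrow> complex) \<Rightarrow>
    (complex \<Rightarrow> complex) \<times> (complex \<Rightarrow> complex) \<Rightarrow>
    (complex \<Rightarrow> complex) \<times> (complex \<Rightarrow> complex) \<Rightarrow> complex" where
  "metric_eta c r m a ah phi X1 X2 =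
     (let zeta = (\<lambda>z. a z - ah z);
          dz1 = (\<lambda>z. fst X1 z - snd X1 z); dz2 = (\<lambda>z. fst X2 z - snd X2 z);
          ell = (\<lambda>z. plus_part c r m a z + minus_part c r m ah z);
          dl1 = (\<lambda>z. plus_part c r m (fst X1) z + minus_part c r m (snd X1) z);
          dl2 = (\<lambda>z. plus_part c r m (fst X2) z + minus_part c r m (snd X2) z);
          F = (\<lambda>z. dl1 z * dl2 z / deriv ell z)
      in - (1 / (2 * pi * \<i>)) *
           (\<Sum>j\<in>{1..m}. contour_integral (circlepath (c j) (r j))
                             (\<lambda>z. dz1 z * dz2 z / deriv zeta z))
         - (residue_inf F + (\<Sum>j\<in>{1..m}. residue F (phi j))))"

end

theory Submission
  imports Defs
begin

text \<open>For a pair \<open>X = (w, wh)\<close> of germs put \<open>s\<^sub>X = w + wh\<close> and \<open>t\<^sub>X = w a' + wh ah'\<close>.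
  Expanding \<open>h\<^sub>+ = h - h\<^sub>-\<close>, both components of \<open>X \<circ> Y\<close> are polynomials in \<open>w, wh, a', ah'\<close> and
  \<open>(t\<^sub>X)\<^sub>-, (t\<^sub>Y)\<^sub>-\<close>, and \<open>t\<^sub>X\<^sub>\<circ>\<^sub>Y = (t\<^sub>X)\<^sub>+(t\<^sub>Y)\<^sub>+ - (t\<^sub>X)\<^sub>-(t\<^sub>Y)\<^sub>-\<close>. A product of plus parts extends
  holomorphically into the disks, so its minus part vanishes; a product of minus parts is
  holomorphic outside the disks and \<open>O(|z|\<^sup>-\<^sup>2)\<close>, so its plus part vanishes by Liouville.
  Hence \<open>(t\<^sub>X\<^sub>\<circ>\<^sub>Y)\<^sub>- = -(t\<^sub>X)\<^sub>-(t\<^sub>Y)\<^sub>-\<close>, and the product on pairs of germs is commutative and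
  associative already before passing to the quotient \<open>T\<^sup>*M\<close>.

  Invariance reduces to associativity through \<open>\<langle>\<eta> X, \<eta> Y\<rangle>\<^sub>\<eta> = (2\<pi>i)\<^sup>-\<^sup>1 \<Sum>\<^sub>j \<ointegral>\<^sub>\<gamma>\<^sub>j s\<^sub>X\<^sub>\<circ>\<^sub>Y\<close>.
  The residue of \<open>\<partial>\<^sub>X\<ell> \<partial>\<^sub>Y\<ell> / \<ell>'\<close> at \<open>\<infinity>\<close> is that of \<open>a' (s\<^sub>X)\<^sub>-(s\<^sub>Y)\<^sub>-\<close>, the rest being
  \<open>O(|z|\<^sup>-\<^sup>2)\<close>, and at the pole \<open>\<phi>\<^sub>j\<close> it is that of \<open>ah' (s\<^sub>X)\<^sub>+(s\<^sub>Y)\<^sub>+\<close>, the rest being bounded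
  because \<open>\<ell>'\<close> has a pole there; both residues become integrals over the circles. The circle
  term of the metric contributes \<open>(a' - ah')((s\<^sub>X)\<^sub>- - w\<^sub>X)((s\<^sub>Y)\<^sub>- - w\<^sub>Y)\<close>, and the remaining
  terms of \<open>s\<^sub>X\<^sub>\<circ>\<^sub>Y\<close> are products of two plus or of two minus parts, whose circle integrals
  vanish.\<close>

section \<open>Cauchy integrals over circles\<close>

lemma contour_integrable_circlepath:
  assumes "continuous_on (sphere a \<rho>) f" "\<rho> > 0"
  shows "f contour_integrable_on (circlepath a \<rho>)"
  using assms by (intro contour_integrable_continuous_circlepath) simp

lemma contour_integrable_circlepath_cauchy:
  assumes "continuous_on (sphere a \<rho>) h" "\<rho> > 0" "z \<notin> sphere a \<rho>"
  shows "(\<lambda>p. h p / (p - z) ^ k) contour_integrable_on (circlepath a \<rho>)"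
  using assms by (intro contour_integrable_circlepath continuous_intros) auto

lemma norm_contour_integral_circlepath_le:
  assumes "continuous_on (sphere a \<rho>) f" "\<rho> > 0" "B \<ge> 0"
    and "\<And>p. p \<in> sphere a \<rho> \<Longrightarrow> norm (f p) \<le> B"
  shows "norm (contour_integral (circlepath a \<rho>) f) \<le> B * (2 * pi * \<rho>)"
proof -
  have "(f has_contour_integral contour_integral (circlepath a \<rho>) f) (circlepath a \<rho>)"
    using contour_integrable_circlepath[OF assms(1,2)] by (simp add: has_contour_integral_integral)
  then show ?thesis
    by (rule has_contour_integral_bound_circlepath)
       (use assms in \<open>auto simp: dist_norm norm_minus_commute\<close>)
qed

lemma winding_number_circlepath_outside:
  assumes "dist a z > \<rho>" "\<rho> \<ge> 0"
  shows "winding_number (circlepath a \<rho>) z = 0"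
  by (rule winding_number_zero_outside[where s = "cball a \<rho>"]) (use assms in auto)

lemma contour_integral_circlepath_inverse:
  assumes "dist a z \<noteq> \<rho>" "\<rho> > 0"
  shows "contour_integral (circlepath a \<rho>) (\<lambda>p. 1 / (p - z)) = (if dist a z < \<rho> then 2 * pi * \<i> else 0)"
proof -
  have "z \<notin> path_image (circlepath a \<rho>)" using assms by auto
  then have "contour_integral (circlepath a \<rho>) (\<lambda>p. 1 / (p - z)) = 2 * pi * \<i> * winding_number (circlepath a \<rho>) z"
    by (simp add: winding_number_valid_path)
  then show ?thesis
    using assms winding_number_circlepath[of z a \<rho>] winding_number_circlepath_outside[of \<rho> a z]
    by (auto simp: dist_norm norm_minus_commute)
qed

lemma contour_integral_circlepath_residue:
  assumes f: "f holomorphic_on (ball a (\<rho> + e) - {p})" and e: "e > 0" and p: "dist a p < \<rho>"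
  shows "contour_integral (circlepath a \<rho>) f = 2 * pi * \<i> * residue f p"
proof -
  have \<rho>: "\<rho> > 0" using p by (smt (verit) zero_le_dist)
  have "contour_integral (circlepath a \<rho>) f = 2 * pi * \<i> * (\<Sum>q\<in>{p}. winding_number (circlepath a \<rho>) q * residue f q)"
  proof (rule Residue_theorem[OF open_ball connected_ball finite.insertI[OF finite.emptyI] f])
    show "path_image (circlepath a \<rho>) \<subseteq> ball a (\<rho> + e) - {p}" using \<rho> e p by auto
    show "\<forall>z. z \<notin> ball a (\<rho> + e) \<longrightarrow> winding_number (circlepath a \<rho>) z = 0"
      using \<rho> e by (auto intro!: winding_number_circlepath_outside)
  qed auto
  then show ?thesis using winding_number_circlepath[of p a \<rho>] p by (simp add: dist_norm norm_minus_commute)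
qed

lemma residue_eq_0_if_bounded:
  assumes e: "e > 0" and f: "f holomorphic_on (ball p e - {p})"
    and B: "\<And>z. z \<in> ball p e - {p} \<Longrightarrow> norm (f z) \<le> B"
  shows "residue f p = 0"
proof -
  have "norm (residue f p) \<le> \<bar>B\<bar> * \<epsilon>" if \<epsilon>: "\<epsilon> > 0" "\<epsilon> < e" for \<epsilon>
  proof -
    have "(f has_contour_integral 2 * pi * \<i> * residue f p) (circlepath p \<epsilon>)"
      by (rule base_residue[OF _ _ \<epsilon>(1) f]) (use \<epsilon> in auto)
    then have "norm (2 * pi * \<i> * residue f p) \<le> \<bar>B\<bar> * (2 * pi * \<epsilon>)"
      by (rule has_contour_integral_bound_circlepath)
         (use \<epsilon> B in \<open>auto simp: dist_norm norm_minus_commute intro: order_trans[OF _ abs_ge_self]\<close>)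
    then show ?thesis by (simp add: norm_mult)
  qed
  moreover have "((\<lambda>\<epsilon>. \<bar>B\<bar> * \<epsilon>) \<longlongrightarrow> 0) (at_right 0)"
    by (auto intro!: tendsto_eq_intros)
  ultimately have "norm (residue f p) \<le> 0"
    using e by (intro tendsto_le[OF _ _ tendsto_const]) (auto simp: eventually_at_right_field intro!: exI[of _ e])
  then show ?thesis by simp
qed

definition cauchy_circle :: "complex \<Rightarrow> real \<Rightarrow> (complex \<Rightarrow> complex) \<Rightarrow> complex \<Rightarrow> complex" where
  "cauchy_circle a \<rho> h z = contour_integral (circlepath a \<rho>) (\<lambda>p. h p / (p - z))"

lemma has_field_derivative_cauchy_circle:
  assumes h: "continuous_on (sphere a \<rho>) h" and \<rho>: "\<rho> > 0" and z: "z \<notin> sphere a \<rho>"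
  shows "(cauchy_circle a \<rho> h has_field_derivative
           contour_integral (circlepath a \<rho>) (\<lambda>p. h p / (p - z) ^ 2)) (at z)"
proof -
  have int: "((\<lambda>u. h u / (u - w) ^ 1) has_contour_integral cauchy_circle a \<rho> h w) (circlepath a \<rho>)"
    if "w \<in> - sphere a \<rho>" for w
  proof -
    have "(\<lambda>u. h u / (u - w)) contour_integrable_on (circlepath a \<rho>)"
      using contour_integrable_circlepath_cauchy[OF h \<rho>, of w 1] that by simp
    then show ?thesis unfolding cauchy_circle_def by (simp add: has_contour_integral_integral)
  qed
  have "(cauchy_circle a \<rho> h has_field_derivative
          (of_nat 1 * contour_integral (circlepath a \<rho>) ((\<lambda>k w u. h u / (u - w) ^ k) (Suc 1) z))) (at z)"
    by (rule Cauchy_next_derivative(2)[where S = "- sphere a \<rho>" and B = "2 * pi * \<bar>\<rho>\<bar>"])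
       (use h \<rho> z int in \<open>auto simp: vector_derivative_circlepath norm_mult\<close>)
  then show ?thesis by (simp add: numeral_2_eq_2)
qed

lemma holomorphic_on_cauchy_circle:
  assumes "continuous_on (sphere a \<rho>) h" "\<rho> > 0"
  shows "cauchy_circle a \<rho> h holomorphic_on (- sphere a \<rho>)"
proof -
  have "\<exists>f'. (cauchy_circle a \<rho> h has_field_derivative f') (at x)" if "x \<in> - sphere a \<rho>" for x
    using has_field_derivative_cauchy_circle[OF assms, of x] that by blast
  then show ?thesis by (subst holomorphic_on_open) auto
qed

lemma norm_contour_integral_cauchy_power_le:
  assumes h: "continuous_on (sphere a \<rho>) h" and "\<rho> > 0" "M \<ge> 0" "d > 0"
    and M: "\<And>p. p \<in> sphere a \<rho> \<Longrightarrow> norm (h p) \<le> M"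
    and d: "\<And>p. p \<in> sphere a \<rho> \<Longrightarrow> norm (p - z) \<ge> d"
  shows "norm (contour_integral (circlepath a \<rho>) (\<lambda>p. h p / (p - z) ^ k)) \<le> M / d ^ k * (2 * pi * \<rho>)"
proof (rule norm_contour_integral_circlepath_le)
  have "z \<notin> sphere a \<rho>" using d[of z] \<open>d > 0\<close> by force
  then show "continuous_on (sphere a \<rho>) (\<lambda>p. h p / (p - z) ^ k)"
    using h by (auto intro!: continuous_intros)
  show "norm (h p / (p - z) ^ k) \<le> M / d ^ k" if "p \<in> sphere a \<rho>" for p
  proof -
    have "d ^ k \<le> norm (p - z) ^ k" using d[OF that] \<open>d > 0\<close> by (intro power_mono) auto
    then show ?thesis using M[OF that] \<open>d > 0\<close> \<open>M \<ge> 0\<close>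
      by (auto simp: norm_divide norm_power intro!: frac_le)
  qed
qed (use assms in auto)

lemma cauchy_circle_mult_var:
  assumes h: "continuous_on (sphere a \<rho>) h" and \<rho>: "\<rho> > 0" and z: "z \<notin> sphere a \<rho>"
  shows "z * cauchy_circle a \<rho> h z
           = cauchy_circle a \<rho> (\<lambda>p. p * h p) z - contour_integral (circlepath a \<rho>) h"
proof -
  have hp: "continuous_on (sphere a \<rho>) (\<lambda>p. p * h p)" using h by (intro continuous_intros)
  have i1: "(\<lambda>p. p * h p / (p - z)) contour_integrable_on circlepath a \<rho>"
    using contour_integrable_circlepath_cauchy[OF hp \<rho> z, of 1] by simp
  have i2: "h contour_integrable_on circlepath a \<rho>" using h \<rho> by (rule contour_integrable_circlepath)
  have i3: "(\<lambda>p. h p / (p - z)) contour_integrable_on circlepath a \<rho>"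
    using contour_integrable_circlepath_cauchy[OF h \<rho> z, of 1] by simp
  have "cauchy_circle a \<rho> (\<lambda>p. p * h p) z - contour_integral (circlepath a \<rho>) h
      = contour_integral (circlepath a \<rho>) (\<lambda>p. p * h p / (p - z) - h p)"
    unfolding cauchy_circle_def by (rule contour_integral_diff[OF i1 i2, symmetric])
  also have "\<dots> = contour_integral (circlepath a \<rho>) (\<lambda>p. z * (h p / (p - z)))"
  proof (rule contour_integral_eq)
    fix p assume "p \<in> path_image (circlepath a \<rho>)"
    then have "p \<noteq> z" using z \<rho> by auto
    then show "p * h p / (p - z) - h p = z * (h p / (p - z))" by (simp add: field_simps)
  qed
  also have "\<dots> = z * cauchy_circle a \<rho> h z"
    unfolding cauchy_circle_def by (rule contour_integral_lmul[OF i3])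
  finally show ?thesis by simp
qed

lemma homotopic_loops_concentric_circlepaths:
  assumes r12: "0 < \<rho>1" "\<rho>1 < \<rho>2"
    and ann: "{p. \<rho>1 \<le> dist a p \<and> dist a p \<le> \<rho>2} \<subseteq> U"
  shows "homotopic_loops U (circlepath a \<rho>1) (circlepath a \<rho>2)"
proof (rule homotopic_loops_linear)
  fix t :: real assume t: "t \<in> {0..1}"
  define e where "e = exp (2 * of_real pi * \<i> * of_real t)"
  have ne: "norm e = 1" unfolding e_def by simp
  show "closed_segment (circlepath a \<rho>1 t) (circlepath a \<rho>2 t) \<subseteq> U"
  proof
    fix x assume "x \<in> closed_segment (circlepath a \<rho>1 t) (circlepath a \<rho>2 t)"
    then obtain u where u: "0 \<le> u" "u \<le> 1" "x = (1 - u) *\<^sub>R (a + \<rho>1 * e) + u *\<^sub>R (a + \<rho>2 * e)"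
      by (auto simp: closed_segment_def circlepath e_def)
    then have xa: "x - a = of_real ((1 - u) * \<rho>1 + u * \<rho>2) * e"
      by (simp add: scaleR_conv_of_real algebra_simps)
    have "dist a x = norm (x - a)" by (simp add: dist_norm norm_minus_commute)
    also have "\<dots> = \<bar>(1 - u) * \<rho>1 + u * \<rho>2\<bar>"
      unfolding xa norm_mult norm_of_real ne by simp
    finally have "dist a x = \<bar>(1 - u) * \<rho>1 + u * \<rho>2\<bar>" .
    moreover have "\<rho>1 \<le> (1 - u) * \<rho>1 + u * \<rho>2" "(1 - u) * \<rho>1 + u * \<rho>2 \<le> \<rho>2"
      using u r12 mult_left_mono[of \<rho>1 \<rho>2 u] mult_left_mono[of \<rho>1 \<rho>2 "1 - u"]
      by (auto simp: algebra_simps)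
    ultimately show "x \<in> U" using ann r12 by auto
  qed
qed auto

lemma cauchy_circle_annulus:
  assumes holo: "h holomorphic_on U" and U: "open U"
    and r12: "0 < \<rho>1" "\<rho>1 < \<rho>2"
    and ann: "{p. \<rho>1 \<le> dist a p \<and> dist a p \<le> \<rho>2} \<subseteq> U"
    and z: "z \<in> U" "dist a z < \<rho>2" "dist a z \<noteq> \<rho>1"
  shows "cauchy_circle a \<rho>2 h z
           = cauchy_circle a \<rho>1 h z + (if dist a z > \<rho>1 then 2 * pi * \<i> * h z else 0)"
proof -
  define g where "g = (\<lambda>p. if p = z then deriv h z else (h p - h z) / (p - z))"
  have gh: "g holomorphic_on U" unfolding g_def
    by (rule pole_lemma[OF holo]) (use U z in \<open>simp add: interior_open\<close>)
  have eqI: "contour_integral (circlepath a \<rho>1) g = contour_integral (circlepath a \<rho>2) g"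
    by (rule Cauchy_theorem_homotopic_loops[OF homotopic_loops_concentric_circlepaths[OF r12 ann] U gh])
       auto
  have split: "contour_integral (circlepath a \<rho>) g
                 = cauchy_circle a \<rho> h z - h z * contour_integral (circlepath a \<rho>) (\<lambda>p. 1 / (p - z))"
    if \<rho>: "\<rho> \<in> {\<rho>1, \<rho>2}" "dist a z \<noteq> \<rho>" for \<rho>
  proof -
    have rp: "\<rho> > 0" using \<rho> r12 by auto
    have zs: "z \<notin> sphere a \<rho>" using \<rho> by auto
    have hc: "continuous_on (sphere a \<rho>) h"
      using \<rho> ann holomorphic_on_imp_continuous_on[OF holo] r12 by (elim continuous_on_subset) auto
    have "contour_integral (circlepath a \<rho>) g
            = contour_integral (circlepath a \<rho>) (\<lambda>p. h p / (p - z) - h z * (1 / (p - z)))"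
      by (rule contour_integral_eq) (use rp zs in \<open>auto simp: g_def diff_divide_distrib\<close>)
    also have "\<dots> = cauchy_circle a \<rho> h z - contour_integral (circlepath a \<rho>) (\<lambda>p. h z * (1 / (p - z)))"
      unfolding cauchy_circle_def
      by (rule contour_integral_diff; rule contour_integrable_circlepath)
         (use rp zs hc in \<open>auto intro!: continuous_intros\<close>)
    also have "contour_integral (circlepath a \<rho>) (\<lambda>p. h z * (1 / (p - z)))
                 = h z * contour_integral (circlepath a \<rho>) (\<lambda>p. 1 / (p - z))"
      by (rule contour_integral_lmul; rule contour_integrable_circlepath)
         (use rp zs in \<open>auto intro!: continuous_intros\<close>)
    finally show ?thesis .
  qed
  show ?thesis
    using eqI split[of \<rho>1] split[of \<rho>2] z r12
      contour_integral_circlepath_inverse[of a z \<rho>1] contour_integral_circlepath_inverse[of a z \<rho>2]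
    by (auto simp: algebra_simps split: if_splits)
qed

section \<open>Decay at infinity and the residue at infinity\<close>

definition decay :: "nat \<Rightarrow> (complex \<Rightarrow> complex) \<Rightarrow> bool" where
  "decay k f \<longleftrightarrow> (\<exists>C. eventually (\<lambda>z. norm (f z) \<le> C / norm z ^ k) at_infinity)"

lemma eventually_norm_ge_at_infinity: "eventually (\<lambda>z::'a::real_normed_vector. norm z \<ge> R) at_infinity"
  using filterlim_norm_at_top by (auto simp: filterlim_at_top)

lemma eventually_norm_gt_at_infinity: "eventually (\<lambda>z::'a::real_normed_vector. norm z > R) at_infinity"
  using eventually_norm_ge_at_infinity[of "R + 1"] by eventually_elim simp

lemma decay_tendsto_0:
  assumes "decay k f" "k \<ge> 1" shows "(f \<longlongrightarrow> 0) at_infinity"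
proof -
  obtain C where C: "eventually (\<lambda>z. norm (f z) \<le> C / norm z ^ k) at_infinity"
    using assms by (auto simp: decay_def)
  have "filterlim (\<lambda>z::complex. norm z ^ k) at_top at_infinity"
    using assms(2) by (intro filterlim_pow_at_top filterlim_norm_at_top) auto
  then have "((\<lambda>z::complex. C / norm z ^ k) \<longlongrightarrow> 0) at_infinity"
    by (intro tendsto_divide_0[OF tendsto_const] filterlim_at_top_imp_at_infinity)
  then show ?thesis by (rule Lim_null_comparison[OF C])
qed

lemma decay_cong:
  assumes "decay k f" "eventually (\<lambda>z. f z = g z) at_infinity" shows "decay k g"
proof -
  obtain C where "eventually (\<lambda>z. norm (f z) \<le> C / norm z ^ k) at_infinity"
    using assms by (auto simp: decay_def)
  then have "eventually (\<lambda>z. norm (g z) \<le> C / norm z ^ k) at_infinity"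
    using assms(2) by eventually_elim auto
  then show ?thesis by (auto simp: decay_def)
qed

lemma decay_add:
  assumes "decay k f" "decay k g" shows "decay k (\<lambda>z. f z + g z)"
proof -
  obtain C D where "eventually (\<lambda>z. norm (f z) \<le> C / norm z ^ k) at_infinity"
    and "eventually (\<lambda>z. norm (g z) \<le> D / norm z ^ k) at_infinity"
    using assms by (auto simp: decay_def)
  then have "eventually (\<lambda>z. norm (f z + g z) \<le> (C + D) / norm z ^ k) at_infinity"
    by eventually_elim (smt (verit) add_divide_distrib norm_triangle_ineq)
  then show ?thesis by (auto simp: decay_def)
qed

lemma decay_uminus: "decay k f \<Longrightarrow> decay k (\<lambda>z. - f z)"
  by (simp add: decay_def)

lemma decay_sum:
  assumes "finite A" "\<And>s. s \<in> A \<Longrightarrow> decay k (f s)"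
  shows "decay k (\<lambda>z. \<Sum>s\<in>A. f s z)"
  using assms
proof (induction A rule: finite_induct)
  case empty then show ?case by (auto simp: decay_def intro!: exI[of _ 0])
next
  case (insert x F)
  then show ?case using decay_add[of k "f x" "\<lambda>z. \<Sum>s\<in>F. f s z"] by simp
qed

lemma decay_mult:
  assumes "decay j f" "decay k g" shows "decay (j + k) (\<lambda>z. f z * g z)"
proof -
  obtain C D where "eventually (\<lambda>z. norm (f z) \<le> C / norm z ^ j) at_infinity"
    and "eventually (\<lambda>z. norm (g z) \<le> D / norm z ^ k) at_infinity"
    using assms by (auto simp: decay_def)
  then have "eventually (\<lambda>z. norm (f z * g z) \<le> (C * D) / norm z ^ (j + k)) at_infinity"
  proof eventually_elim
    case (elim z)
    have "norm (f z * g z) \<le> (C / norm z ^ j) * (D / norm z ^ k)"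
      unfolding norm_mult using elim by (intro mult_mono) (auto intro: order_trans[OF norm_ge_zero])
    then show ?case by (simp add: power_add)
  qed
  then show ?thesis by (auto simp: decay_def)
qed

lemma decay_mult_bounded:
  assumes "decay k f" "eventually (\<lambda>z. norm (g z) \<le> B) at_infinity"
  shows "decay k (\<lambda>z. g z * f z)"
proof -
  obtain C where "eventually (\<lambda>z. norm (f z) \<le> C / norm z ^ k) at_infinity"
    using assms by (auto simp: decay_def)
  then have "eventually (\<lambda>z. norm (g z * f z) \<le> (B * C) / norm z ^ k) at_infinity"
    using assms(2)
  proof eventually_elim
    case (elim z)
    have "norm (g z * f z) \<le> B * (C / norm z ^ k)"
      unfolding norm_mult using elim by (intro mult_mono) (auto intro: order_trans[OF norm_ge_zero])
    then show ?case by simp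
  qed
  then show ?thesis by (auto simp: decay_def)
qed

lemma decay_cmult: "decay k f \<Longrightarrow> decay k (\<lambda>z. K * f z)"
  by (rule decay_mult_bounded[where B = "norm K"]) auto

lemma decay_mult_var:
  assumes "decay (Suc k) f" shows "decay k (\<lambda>z. z * f z)"
proof -
  obtain C where "eventually (\<lambda>z. norm (f z) \<le> C / norm z ^ Suc k) at_infinity"
    using assms by (auto simp: decay_def)
  then have "eventually (\<lambda>z. norm (z * f z) \<le> C / norm z ^ k) at_infinity"
    using eventually_norm_ge_at_infinity[of 1]
  proof eventually_elim
    case (elim z)
    have "norm (z * f z) \<le> norm z * (C / norm z ^ Suc k)"
      unfolding norm_mult using elim by (intro mult_left_mono) auto
    also have "\<dots> = C / norm z ^ k" using elim by (auto simp: field_simps)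
    finally show ?case .
  qed
  then show ?thesis by (auto simp: decay_def)
qed

lemma decay_divide_var:
  assumes "decay k f" shows "decay (Suc k) (\<lambda>z. f z / z)"
proof -
  obtain C where "eventually (\<lambda>z. norm (f z) \<le> C / norm z ^ k) at_infinity"
    using assms by (auto simp: decay_def)
  then have "eventually (\<lambda>z. norm (f z / z) \<le> C / norm z ^ Suc k) at_infinity"
    using eventually_norm_ge_at_infinity[of 1]
  proof eventually_elim
    case (elim z)
    have "norm (f z / z) \<le> (C / norm z ^ k) / norm z"
      unfolding norm_divide using elim by (intro divide_right_mono) auto
    then show ?case by (simp add: field_simps)
  qed
  then show ?thesis by (auto simp: decay_def)
qed

lemma contour_integral_circlepath_decay_tendsto_0:
  assumes F: "continuous_on {z. norm z > R1} F" and d: "decay 2 F"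
  shows "((\<lambda>R. contour_integral (circlepath 0 R) F) \<longlongrightarrow> 0) at_top"
proof -
  obtain C B where B: "\<And>z. norm z \<ge> B \<Longrightarrow> norm (F z) \<le> C / norm z ^ 2"
    using d by (auto simp: decay_def eventually_at_infinity)
  have "eventually (\<lambda>R. norm (contour_integral (circlepath 0 R) F) \<le> 2 * pi * \<bar>C\<bar> / R) at_top"
    using eventually_ge_at_top[of "max B (max R1 0) + 1"]
  proof eventually_elim
    case (elim R)
    then have "R > 0" by linarith
    have "norm (contour_integral (circlepath 0 R) F) \<le> \<bar>C\<bar> / R ^ 2 * (2 * pi * R)"
    proof (rule norm_contour_integral_circlepath_le)
      show "continuous_on (sphere 0 R) F" using elim by (intro continuous_on_subset[OF F]) auto
      show "norm (F p) \<le> \<bar>C\<bar> / R ^ 2" if "p \<in> sphere 0 R" for p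
        using B[of p] that elim by (auto intro: order_trans[OF _ divide_right_mono[OF abs_ge_self]])
    qed (use elim in auto)
    also have "\<dots> = 2 * pi * \<bar>C\<bar> / R" using \<open>R > 0\<close> by (simp add: power2_eq_square)
    finally show ?case .
  qed
  moreover have "((\<lambda>R. 2 * pi * \<bar>C\<bar> / R) \<longlongrightarrow> 0) at_top"
    by (intro tendsto_divide_0[OF tendsto_const] filterlim_at_top_imp_at_infinity filterlim_ident)
  ultimately show ?thesis by (rule Lim_null_comparison)
qed

lemma circlepath_inverse: "(\<lambda>w. 1 / w) \<circ> circlepath 0 (1 / R) = reversepath (circlepath 0 R)"
proof
  fix t
  have "exp (2 * of_real pi * \<i> * of_real (1 - t)) = exp (2 * of_real pi * \<i> - 2 * of_real pi * \<i> * of_real t)"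
    by (simp add: algebra_simps)
  also have "\<dots> = 1 / exp (2 * of_real pi * \<i> * of_real t)" by (simp add: exp_diff)
  finally have e: "exp (2 * of_real pi * \<i> * of_real (1 - t)) = 1 / exp (2 * of_real pi * \<i> * of_real t)" .
  show "((\<lambda>w. 1 / w) \<circ> circlepath 0 (1 / R)) t = reversepath (circlepath 0 R) t"
    by (simp only: o_def circlepath reversepath_def e) (simp add: field_simps)
qed

lemma contour_integral_circlepath_inversion:
  assumes "R > 0"
  shows "contour_integral (circlepath 0 R) F
           = contour_integral (circlepath 0 (1 / R)) (\<lambda>w. F (1 / w) / w ^ 2)"
proof -
  have "(\<lambda>w::complex. 1 / w) analytic_on (- {0})"
    by (subst analytic_on_open) (auto intro!: holomorphic_intros)
  then have "contour_integral ((\<lambda>w. 1 / w) \<circ> circlepath 0 (1 / R)) F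
               = contour_integral (circlepath 0 (1 / R)) (\<lambda>w. deriv (\<lambda>w. 1 / w) w * F (1 / w))"
    by (rule contour_integral_comp_analyticW) (use assms in auto)
  also have "\<dots> = contour_integral (circlepath 0 (1 / R)) (\<lambda>w. - (F (1 / w) / w ^ 2))"
  proof (rule contour_integral_eq)
    fix w assume "w \<in> path_image (circlepath 0 (1 / R))"
    then have "w \<noteq> 0" using assms by auto
    then have "deriv (\<lambda>w. 1 / w) w = - 1 / w ^ 2"
      by (intro DERIV_imp_deriv) (auto intro!: derivative_eq_intros simp: power2_eq_square field_simps)
    then show "deriv (\<lambda>w. 1 / w) w * F (1 / w) = - (F (1 / w) / w ^ 2)" by simp
  qed
  finally show ?thesis
    unfolding circlepath_inverse contour_integral_reversepath[OF valid_path_circlepath]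
      contour_integral_neg by simp
qed

lemma residue_inf_conv_contour_integral:
  assumes F: "F holomorphic_on {z. norm z > R1}" and R1: "R1 > 0" and R: "R > R1"
  shows "residue_inf F = - (1 / (2 * pi * \<i>)) * contour_integral (circlepath 0 R) F"
proof -
  have "(\<lambda>w::complex. 1 / w) ` (ball 0 (1 / R1) - {0}) \<subseteq> {z. norm z > R1}"
    using R1 by (auto simp: norm_divide field_simps)
  then have "(F \<circ> (\<lambda>w. 1 / w)) holomorphic_on (ball 0 (1 / R1) - {0})"
    by (intro holomorphic_on_compose holomorphic_on_subset[OF F]) (auto intro!: holomorphic_intros)
  then have G: "(\<lambda>w. F (1 / w) / w ^ 2) holomorphic_on (ball 0 (1 / R1) - {0})"
    by (auto intro!: holomorphic_intros simp: o_def)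
  have "((\<lambda>w. F (1 / w) / w ^ 2) has_contour_integral 2 * pi * \<i> * residue (\<lambda>w. F (1 / w) / w ^ 2) 0)
          (circlepath 0 (1 / R))"
  proof (rule base_residue[OF _ _ _ G])
    have "1 / R < 1 / R1" using R R1 by (simp add: frac_less2)
    then show "cball (0::complex) (1 / R) \<subseteq> ball 0 (1 / R1)" by (subst cball_subset_ball_iff) auto
  qed (use R R1 in auto)
  moreover have "contour_integral (circlepath 0 R) F
                   = contour_integral (circlepath 0 (1 / R)) (\<lambda>w. F (1 / w) / w ^ 2)"
    using R R1 by (intro contour_integral_circlepath_inversion) auto
  ultimately show ?thesis by (auto simp: residue_inf_def dest!: contour_integral_unique)
qed

lemma residue_inf_eq_0_if_decay:
  assumes F: "F holomorphic_on {z. norm z > R1}" and R1: "R1 > 0" and d: "decay 2 F"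
  shows "residue_inf F = 0"
proof -
  have "((\<lambda>R. - (1 / (2 * pi * \<i>)) * contour_integral (circlepath 0 R) F) \<longlongrightarrow> 0) at_top"
    using contour_integral_circlepath_decay_tendsto_0[OF holomorphic_on_imp_continuous_on[OF F] d]
    by (rule tendsto_mult_right_zero)
  moreover have "eventually (\<lambda>R. - (1 / (2 * pi * \<i>)) * contour_integral (circlepath 0 R) F = residue_inf F) at_top"
    using eventually_gt_at_top[of R1] by eventually_elim (simp add: residue_inf_conv_contour_integral[OF F R1])
  ultimately have "((\<lambda>R::real. residue_inf F) \<longlongrightarrow> 0) at_top" by (rule Lim_transform_eventually)
  then show ?thesis by (simp add: tendsto_const_iff)
qed

lemma residue_inf_add:
  assumes F: "F holomorphic_on {z. norm z > R1}" and G: "G holomorphic_on {z. norm z > R1}" and R1: "R1 > 0"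
  shows "residue_inf (\<lambda>z. F z + G z) = residue_inf F + residue_inf G"
proof -
  have R: "R1 + 1 > R1" by simp
  have sub: "sphere 0 (R1 + 1) \<subseteq> {z. norm z > R1}" by auto
  have "F contour_integrable_on circlepath 0 (R1 + 1)" "G contour_integrable_on circlepath 0 (R1 + 1)"
    using holomorphic_on_imp_continuous_on[OF F] holomorphic_on_imp_continuous_on[OF G] sub R1
    by (auto intro!: contour_integrable_circlepath elim: continuous_on_subset)
  moreover have "(\<lambda>z. F z + G z) holomorphic_on {z. norm z > R1}" using F G by (intro holomorphic_intros)
  ultimately show ?thesis
    unfolding residue_inf_conv_contour_integral[OF F R1 R] residue_inf_conv_contour_integral[OF G R1 R]
    by (simp add: residue_inf_conv_contour_integral[OF _ R1 R] contour_integral_add algebra_simps)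
qed

lemma residue_inf_cong:
  assumes F: "F holomorphic_on {z. norm z > R1}" and G: "G holomorphic_on {z. norm z > R1}" and R1: "R1 > 0"
    and eq: "\<And>z. norm z > R1 \<Longrightarrow> F z = G z"
  shows "residue_inf F = residue_inf G"
proof -
  have R: "R1 + 1 > R1" by simp
  have "contour_integral (circlepath 0 (R1 + 1)) F = contour_integral (circlepath 0 (R1 + 1)) G"
    by (rule contour_integral_eq) (use R1 eq in auto)
  then show ?thesis
    unfolding residue_inf_conv_contour_integral[OF F R1 R] residue_inf_conv_contour_integral[OF G R1 R] by simp
qed

section \<open>Poles and growth of derivatives\<close>

lemma holomorphic_on_removable_power_mult:
  assumes e: "e > 0" and hol: "f holomorphic_on (ball \<phi> e - {\<phi>})"
    and lim: "((\<lambda>z. (z - \<phi>) ^ n * f z) \<longlongrightarrow> L) (at \<phi>)"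
  shows "(\<lambda>z. if z = \<phi> then L else (z - \<phi>) ^ n * f z) holomorphic_on ball \<phi> e"
    (is "?g holomorphic_on _")
proof (rule no_isolated_singularity[where K = "{\<phi>}"])
  have punct: "?g holomorphic_on (ball \<phi> e - {\<phi>})"
    by (rule holomorphic_transform[where f = "\<lambda>z. (z - \<phi>) ^ n * f z"]) (use hol in \<open>auto intro!: holomorphic_intros\<close>)
  then show "?g holomorphic_on (ball \<phi> e - {\<phi>})" .
  have "isCont ?g z" if z: "z \<in> ball \<phi> e" for z
  proof (cases "z = \<phi>")
    case True
    have "(?g \<longlongrightarrow> L) (at \<phi>)"
      using lim by (rule Lim_transform_eventually) (auto simp: eventually_at_filter)
    then show ?thesis using True by (simp add: isCont_def)
  next
    case False
    then show ?thesis using z holomorphic_on_imp_continuous_on[OF punct]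
      by (subst (asm) continuous_on_eq_continuous_at) auto
  qed
  then show "continuous_on (ball \<phi> e) ?g" by (simp add: continuous_at_imp_continuous_on)
qed auto

lemma power_mult_deriv_tendsto:
  assumes e: "e > 0" and hol: "f holomorphic_on (ball \<phi> e - {\<phi>})"
    and lim: "((\<lambda>z. (z - \<phi>) ^ n * f z) \<longlongrightarrow> L) (at \<phi>)"
  shows "((\<lambda>z. (z - \<phi>) ^ Suc n * deriv f z) \<longlongrightarrow> - (of_nat n * L)) (at \<phi>)"
proof -
  define g where "g z = (if z = \<phi> then L else (z - \<phi>) ^ n * f z)" for z
  have gh: "g holomorphic_on ball \<phi> e"
    unfolding g_def[abs_def] by (rule holomorphic_on_removable_power_mult[OF e hol lim])
  have key: "(z - \<phi>) ^ Suc n * deriv f z = (z - \<phi>) * deriv g z - of_nat n * g z"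
    if z: "z \<in> ball \<phi> e - {\<phi>}" for z
  proof -
    have op: "open (ball \<phi> e - {\<phi>})" by auto
    have "deriv g z = deriv (\<lambda>w. (w - \<phi>) ^ n * f w) z"
      by (rule deriv_cong_ev) (use z op in \<open>auto simp: g_def eventually_nhds intro!: exI[of _ "ball \<phi> e - {\<phi>}"]\<close>)
    also have "\<dots> = of_nat n * (z - \<phi>) ^ (n - 1) * f z + (z - \<phi>) ^ n * deriv f z"
    proof (rule DERIV_imp_deriv)
      have "(f has_field_derivative deriv f z) (at z)"
        using hol op z by (auto intro!: holomorphic_derivI)
      then show "((\<lambda>w. (w - \<phi>) ^ n * f w) has_field_derivative
                   of_nat n * (z - \<phi>) ^ (n - 1) * f z + (z - \<phi>) ^ n * deriv f z) (at z)"
        by (auto intro!: derivative_eq_intros)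
    qed
    finally have dg: "deriv g z = of_nat n * (z - \<phi>) ^ (n - 1) * f z + (z - \<phi>) ^ n * deriv f z" .
    have pw: "(z - \<phi>) * (of_nat n * (z - \<phi>) ^ (n - 1)) = of_nat n * (z - \<phi>) ^ n"
      by (cases n) auto
    have "(z - \<phi>) * deriv g z - of_nat n * g z
            = ((z - \<phi>) * (of_nat n * (z - \<phi>) ^ (n - 1))) * f z + (z - \<phi>) ^ Suc n * deriv f z
              - of_nat n * (z - \<phi>) ^ n * f z"
      using z unfolding dg by (simp add: g_def algebra_simps)
    then show ?thesis unfolding pw by simp
  qed
  have "isCont g \<phi>" "isCont (deriv g) \<phi>"
    using holomorphic_on_imp_continuous_on[OF gh] holomorphic_on_imp_continuous_on[OF holomorphic_deriv[OF gh]] e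
    by (auto simp: continuous_on_eq_continuous_at)
  then have "((\<lambda>z. (z - \<phi>) * deriv g z - of_nat n * g z) \<longlongrightarrow> (\<phi> - \<phi>) * deriv g \<phi> - of_nat n * g \<phi>) (at \<phi>)"
    by (intro tendsto_intros) (auto simp: isCont_def)
  then have "((\<lambda>z. (z - \<phi>) * deriv g z - of_nat n * g z) \<longlongrightarrow> - (of_nat n * L)) (at \<phi>)"
    by (simp add: g_def)
  moreover have "eventually (\<lambda>z. (z - \<phi>) * deriv g z - of_nat n * g z = (z - \<phi>) ^ Suc n * deriv f z) (at \<phi>)"
    unfolding eventually_at using e key by (intro exI[of _ e]) (auto simp: dist_commute)
  ultimately show ?thesis by (rule Lim_transform_eventually)
qed

lemma powr_le_on_annulus:
  fixes x t :: real
  assumes "x > 0" "x / 2 \<le> t" "t \<le> 3 * x / 2"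
  shows "t powr e \<le> ((1 / 2) powr e + (3 / 2) powr e) * x powr e"
proof (cases "e \<ge> 0")
  case True
  have "t powr e \<le> (3 * x / 2) powr e" using assms True by (intro powr_mono2) auto
  also have "\<dots> = (3 / 2) powr e * x powr e" by (simp add: powr_mult[symmetric])
  finally show ?thesis by (simp add: distrib_right add_increasing)
next
  case False
  have "t powr e \<le> (x / 2) powr e" using assms False by (intro powr_mono2') auto
  also have "\<dots> = (1 / 2) powr e * x powr e" by (simp add: powr_mult[symmetric])
  finally show ?thesis by (simp add: distrib_right add_increasing2)
qed

text \<open>Cauchy's estimate on the disc of radius \<open>|z|/2\<close> around \<open>z\<close>.\<close>
lemma deriv_growth_at_infinity:
  assumes hol: "g holomorphic_on {z. norm z > R}"
    and gr: "eventually (\<lambda>z. norm (g z) \<le> C * norm z powr e) at_infinity"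
  obtains K where "eventually (\<lambda>z. norm (deriv g z) \<le> K * norm z powr (e - 1)) at_infinity"
proof -
  obtain B where B: "\<And>w. norm w \<ge> B \<Longrightarrow> norm (g w) \<le> C * norm w powr e"
    using gr by (auto simp: eventually_at_infinity)
  define A where "A = (1 / 2) powr e + (3 / 2) powr e"
  have "eventually (\<lambda>z. norm (deriv g z) \<le> (2 * \<bar>C\<bar> * A) * norm z powr (e - 1)) at_infinity"
    using eventually_norm_ge_at_infinity[of "max (2 * B) (2 * \<bar>R\<bar> + 2)"]
  proof eventually_elim
    case (elim z)
    define x where "x = norm z"
    have x: "x \<ge> 2 * B" "x \<ge> 2 * \<bar>R\<bar> + 2" using elim by (auto simp: x_def)
    have near: "x / 2 \<le> norm w" "norm w \<le> 3 * x / 2" if "norm (z - w) \<le> x / 2" for w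
      using that norm_triangle_sub[of z w] norm_triangle_sub[of w z] norm_minus_commute[of w z]
      unfolding x_def by linarith+
    have cb: "cball z (x / 2) \<subseteq> {z. norm z > R}"
    proof
      fix w assume "w \<in> cball z (x / 2)"
      then have "x / 2 \<le> norm w" using near(1)[of w] by (simp add: dist_norm)
      then show "w \<in> {z. norm z > R}" using x by auto
    qed
    have "norm ((deriv ^^ 1) g z) \<le> fact 1 * (\<bar>C\<bar> * A * x powr e) / (x / 2) ^ 1"
    proof (rule Cauchy_inequality)
      show "g holomorphic_on ball z (x / 2)" using hol cb
        by (rule holomorphic_on_subset[OF _ order_trans[OF ball_subset_cball]])
      show "continuous_on (cball z (x / 2)) g" using holomorphic_on_imp_continuous_on[OF hol] cb
        by (rule continuous_on_subset)
      show "norm (g w) \<le> \<bar>C\<bar> * A * x powr e" if "norm (z - w) = x / 2" for w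
      proof -
        have "norm (g w) \<le> \<bar>C\<bar> * norm w powr e"
          using B[of w] near[of w] that x
          by (intro order_trans[OF _ mult_right_mono[OF abs_ge_self powr_ge_zero]]) auto
        also have "\<dots> \<le> \<bar>C\<bar> * (A * x powr e)"
          unfolding A_def using near[of w] that x by (intro mult_left_mono powr_le_on_annulus) auto
        finally show ?thesis by simp
      qed
    qed (use x in auto)
    also have "\<dots> = (2 * \<bar>C\<bar> * A) * x powr (e - 1)"
      using x by (simp add: powr_diff field_simps)
    finally show ?case by (simp add: x_def)
  qed
  then show ?thesis by (rule that)
qed

lemma mult_powr_le_half_power:
  fixes x K :: real
  assumes x: "x \<ge> 1" "x \<ge> 2 * \<bar>K\<bar> + 1" and N: "N \<ge> 1"
  shows "K * x powr (real N - 3) \<le> x ^ (N - 1) / 2"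
proof -
  have "real N - 3 = real (N - 1) - real 2" using N by (simp add: of_nat_diff)
  then have xp: "x powr (real N - 3) = x ^ (N - 1) / x ^ 2"
    using x by (simp only: powr_diff powr_realpow)
  have "x \<le> x ^ 2" using x(1) by (simp add: power2_eq_square)
  then have Kx: "\<bar>K\<bar> \<le> x ^ 2 / 2" using x by linarith
  have "K * x powr (real N - 3) \<le> \<bar>K\<bar> * (x ^ (N - 1) / x ^ 2)"
    unfolding xp by (rule mult_right_mono) (use x in auto)
  also have "\<dots> \<le> (x ^ 2 / 2) * (x ^ (N - 1) / x ^ 2)"
    using Kx x by (intro mult_right_mono) auto
  also have "\<dots> = x ^ (N - 1) / 2" using x by simp
  finally show ?thesis .
qed

lemma deriv_lower_bound_at_infinity:
  assumes hol: "a holomorphic_on {z. norm z > R}" and N: "N \<ge> 1"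
    and gr: "eventually (\<lambda>z. norm (a z - z ^ N) \<le> C * norm z powr (real N - 2)) at_infinity"
  shows "eventually (\<lambda>z. norm (deriv a z) \<ge> 1 / 2) at_infinity"
proof -
  have "(\<lambda>z. a z - z ^ N) holomorphic_on {z. norm z > R}" using hol by (intro holomorphic_intros)
  then obtain K where K: "eventually (\<lambda>z. norm (deriv (\<lambda>z. a z - z ^ N) z) \<le> K * norm z powr (real N - 2 - 1)) at_infinity"
    using gr by (rule deriv_growth_at_infinity)
  have "real N - 2 - 1 = real N - 3" by simp
  note K = K[unfolded this]
  show ?thesis
    using K eventually_norm_ge_at_infinity[of "max (\<bar>R\<bar> + 1) (2 * \<bar>K\<bar> + 1)"]
  proof eventually_elim
    case (elim z)
    define x where "x = norm z"
    have x: "x \<ge> 1" "x \<ge> 2 * \<bar>K\<bar> + 1" "x > R" using elim by (auto simp: x_def)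
    have "open {z. norm z > R}" by (simp add: open_Collect_less continuous_intros)
    then have "(a has_field_derivative deriv a z) (at z)"
      using hol x by (intro holomorphic_derivI[OF hol]) (auto simp: x_def)
    then have "((\<lambda>z. a z - z ^ N) has_field_derivative deriv a z - of_nat N * z ^ (N - 1)) (at z)"
      by (auto intro!: derivative_eq_intros)
    then have "norm (deriv a z - of_nat N * z ^ (N - 1)) \<le> K * x powr (real N - 3)"
      using elim(1) by (simp add: DERIV_imp_deriv x_def)
    moreover have "norm (of_nat N * z ^ (N - 1)) - norm (deriv a z)
                     \<le> norm (deriv a z - of_nat N * z ^ (N - 1))"
      using norm_triangle_ineq2[of "of_nat N * z ^ (N - 1)" "deriv a z"] by (simp add: norm_minus_commute)
    moreover have "norm (of_nat N * z ^ (N - 1)) = of_nat N * x ^ (N - 1)"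
      by (simp add: x_def norm_mult norm_power)
    ultimately have "norm (deriv a z) \<ge> of_nat N * x ^ (N - 1) - K * x powr (real N - 3)"
      by linarith
    moreover have "K * x powr (real N - 3) \<le> x ^ (N - 1) / 2"
      using x N by (intro mult_powr_le_half_power) auto
    moreover have "x ^ (N - 1) \<le> of_nat N * x ^ (N - 1)" "1 \<le> x ^ (N - 1)"
      using x N by (auto simp: one_le_power)
    ultimately show ?case by linarith
  qed
qed

lemma deriv_ne_0_if_powi:
  assumes V: "open V" "z \<in> V" and w: "w holomorphic_on V" and d: "d \<noteq> 0"
    and eq: "\<And>z. z \<in> V \<Longrightarrow> deriv w z \<noteq> 0 \<and> w z \<noteq> 0 \<and> f z = w z powi d"
  shows "deriv f z \<noteq> 0"
proof -
  have "deriv f z = deriv (\<lambda>z. w z powi d) z"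
    by (rule deriv_cong_ev) (use V eq in \<open>auto simp: eventually_nhds intro!: exI[of _ V]\<close>)
  also have "\<dots> = of_int d * w z powi (d - 1) * deriv w z"
  proof (rule DERIV_imp_deriv)
    have "(w has_field_derivative deriv w z) (at z)"
      using V w by (auto intro!: holomorphic_derivI)
    then show "((\<lambda>z. w z powi d) has_field_derivative of_int d * w z powi (d - 1) * deriv w z) (at z)"
      using eq[OF V(2)] by (auto intro!: derivative_eq_intros)
  qed
  finally show ?thesis using eq[OF V(2)] d by auto
qed

section \<open>The circles and the Cauchy splitting\<close>

locale disks =
  fixes c :: "nat \<Rightarrow> complex" and r :: "nat \<Rightarrow> real" and m :: nat
  assumes r_pos: "\<And>j. j \<in> {1..m} \<Longrightarrow> r j > 0"
    and disjoint: "\<And>i j. i \<in> {1..m} \<Longrightarrow> j \<in> {1..m} \<Longrightarrow> i \<noteq> j \<Longrightarrow> cball (c i) (r i) \<inter> cball (c j) (r j) = {}"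
begin

abbreviation "\<Gamma> \<equiv> circles c r m"
abbreviation "Di \<equiv> Dint c r m"
abbreviation "De \<equiv> Dext c r m"
abbreviation "PP h \<equiv> plus_part c r m h"
abbreviation "NN h \<equiv> minus_part c r m h"
abbreviation "\<H> \<equiv> Hgerm c r m"

lemma mem_\<Gamma>_iff: "z \<in> \<Gamma> \<longleftrightarrow> (\<exists>j\<in>{1..m}. dist (c j) z = r j)"
  by (auto simp: circles_def)

lemma mem_Di_iff: "z \<in> Di \<longleftrightarrow> (\<exists>j\<in>{1..m}. dist (c j) z < r j)"
  by (auto simp: Dint_def)

lemma mem_De_iff: "z \<in> De \<longleftrightarrow> (\<forall>j\<in>{1..m}. dist (c j) z > r j)"
  by (auto simp: Dext_def not_le)

lemma sphere_subset_\<Gamma>: "j \<in> {1..m} \<Longrightarrow> sphere (c j) (r j) \<subseteq> \<Gamma>"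
  by (auto simp: circles_def)

lemma ball_subset_Di: "j \<in> {1..m} \<Longrightarrow> ball (c j) (r j) \<subseteq> Di"
  by (auto simp: Dint_def)

lemma compact_\<Gamma>: "compact \<Gamma>"
  unfolding circles_def by (intro compact_UN) auto

lemma open_Compl_\<Gamma>: "open (- \<Gamma>)"
  using compact_\<Gamma> compact_imp_closed by blast

lemma open_Di: "open Di"
  unfolding Dint_def by auto

lemma open_De: "open De"
  unfolding Dext_def by (intro open_Compl closed_UN) auto

lemma \<Gamma>_Int_Di: "\<Gamma> \<inter> Di = {}"
proof -
  have False if ij: "i \<in> {1..m}" "j \<in> {1..m}" "dist (c i) z = r i" "dist (c j) z < r j" for i j z
  proof (cases "i = j")
    case False
    then have "z \<notin> cball (c i) (r i) \<inter> cball (c j) (r j)" using disjoint ij by auto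
    then show ?thesis using ij by auto
  qed (use ij in auto)
  then show ?thesis by (force simp: mem_\<Gamma>_iff mem_Di_iff)
qed

lemma \<Gamma>_Int_De: "\<Gamma> \<inter> De = {}"
  by (force simp: mem_\<Gamma>_iff mem_De_iff)

lemma Di_Int_De: "Di \<inter> De = {}"
  by (force simp: mem_Di_iff mem_De_iff)

lemma \<Gamma>_Un_Di_Un_De: "\<Gamma> \<union> Di \<union> De = UNIV"
proof -
  have "z \<in> \<Gamma>" if nDi: "z \<notin> Di" and nDe: "z \<notin> De" for z
  proof -
    obtain j where "j \<in> {1..m}" "dist (c j) z \<le> r j" using nDe by (auto simp: mem_De_iff not_less)
    moreover have "dist (c j) z \<ge> r j" using nDi calculation(1) by (auto simp: mem_Di_iff not_less)
    ultimately show ?thesis by (auto simp: mem_\<Gamma>_iff)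
  qed
  then show ?thesis by blast
qed

definition R0 :: real where "R0 = 1 + (\<Sum>j\<in>{1..m}. norm (c j) + r j)"

lemma R0_ge_1: "R0 \<ge> 1"
  using r_pos unfolding R0_def by (smt (verit) norm_ge_zero sum_nonneg)

lemma norm_less_R0: assumes "j \<in> {1..m}" "dist (c j) z \<le> r j" shows "norm z < R0"
proof -
  have "norm (c j) + r j \<le> (\<Sum>j\<in>{1..m}. norm (c j) + r j)"
    by (intro member_le_sum add_nonneg_nonneg norm_ge_zero less_imp_le r_pos) (use assms in auto)
  moreover have "norm z \<le> norm (c j) + dist (c j) z"
    by (metis dist_commute dist_norm norm_triangle_sub add.commute)
  ultimately show ?thesis using assms unfolding R0_def by linarith
qed

lemma norm_less_R0_if_\<Gamma>: "z \<in> \<Gamma> \<Longrightarrow> norm z < R0"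
  using norm_less_R0 by (auto simp: mem_\<Gamma>_iff)

lemma De_if_norm_ge_R0: "norm z \<ge> R0 \<Longrightarrow> z \<in> De"
  unfolding mem_De_iff using norm_less_R0 by (meson not_less not_le)

lemma eventually_De_at_infinity: "eventually (\<lambda>z. z \<in> De) at_infinity"
  using eventually_norm_ge_at_infinity[of R0] by eventually_elim (rule De_if_norm_ge_R0)

lemma dist_centers_gt:
  assumes "i \<in> {1..m}" "j \<in> {1..m}" "i \<noteq> j"
  shows "dist (c i) (c j) > r i + r j"
proof (rule ccontr)
  assume "\<not> ?thesis"
  then have d: "dist (c i) (c j) \<le> r i + r j" by simp
  have ri: "r i > 0" and rj: "r j > 0" using r_pos assms by auto
  define t where "t = r i / (r i + r j)"
  define p where "p = c i + of_real t * (c j - c i)"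
  have t01: "0 \<le> t" "t \<le> 1" using ri rj by (auto simp: t_def)
  have "dist (c i) p = t * dist (c i) (c j)"
    using t01 by (simp add: p_def dist_norm norm_mult norm_minus_commute)
  also have "\<dots> \<le> t * (r i + r j)" using d t01 by (intro mult_left_mono) auto
  also have "\<dots> = r i" using ri rj by (simp add: t_def)
  finally have p1: "p \<in> cball (c i) (r i)" by simp
  have eq: "c j - p = of_real (1 - t) * (c j - c i)" by (simp add: p_def algebra_simps)
  have "dist (c j) p = norm (of_real (1 - t) * (c j - c i))" by (simp only: dist_norm eq)
  also have "\<dots> = (1 - t) * dist (c i) (c j)"
    by (simp only: norm_mult norm_of_real) (simp add: t01 dist_norm norm_minus_commute)
  also have "\<dots> \<le> (1 - t) * (r i + r j)" using d t01 by (intro mult_left_mono) auto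
  also have "\<dots> = r j" using ri rj by (simp add: t_def field_simps)
  finally have p2: "p \<in> cball (c j) (r j)" by simp
  show False using disjoint[OF assms] p1 p2 by blast
qed

lemma nearest_point_on_circle:
  assumes "j \<in> {1..m}" "z \<noteq> c j"
  obtains x where "x \<in> \<Gamma>" "dist x z = \<bar>dist (c j) z - r j\<bar>"
proof
  define d where "d = dist (c j) z"
  have d: "d > 0" using assms by (simp add: d_def)
  define x where "x = c j + of_real (r j / d) * (z - c j)"
  have "dist (c j) x = r j"
    using d r_pos[OF assms(1)] by (simp add: x_def dist_norm norm_mult norm_divide d_def norm_minus_commute)
  then show "x \<in> \<Gamma>" using assms(1) by (auto simp: mem_\<Gamma>_iff)
  have eq: "z - x = of_real (1 - r j / d) * (z - c j)" by (simp add: x_def algebra_simps)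
  have "dist x z = norm (of_real (1 - r j / d) * (z - c j))"
    by (simp only: dist_norm norm_minus_commute[of x] eq)
  also have "\<dots> = \<bar>1 - r j / d\<bar> * d"
    by (simp only: norm_mult norm_of_real) (simp add: d_def dist_norm norm_minus_commute)
  also have "\<dots> = \<bar>d - r j\<bar>" using d by (simp add: abs_mult_pos' field_simps abs_minus_commute)
  finally show "dist x z = \<bar>dist (c j) z - r j\<bar>" by (simp add: d_def)
qed

lemma eventually_thin_annuli_subset:
  assumes U: "open U" "\<Gamma> \<subseteq> U"
  shows "eventually (\<lambda>\<delta>. \<forall>j\<in>{1..m}. \<forall>z. r j - 2 * \<delta> \<le> dist (c j) z \<and> dist (c j) z \<le> r j + 2 * \<delta> \<longrightarrow> z \<in> U)
           (at_right 0)"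
proof -
  obtain \<epsilon> where \<epsilon>: "\<epsilon> > 0" "(\<Union>x\<in>\<Gamma>. ball x \<epsilon>) \<subseteq> U"
    using compact_subset_open_imp_ball_epsilon_subset[OF compact_\<Gamma> U] by blast
  have "eventually (\<lambda>\<delta>. \<delta> < \<epsilon> / 4 \<and> \<delta> < r j / 4) (at_right 0)" if "j \<in> {1..m}" for j
    using \<epsilon>(1) r_pos[OF that]
      by (auto simp: eventually_at_right_field intro!: exI[of _ "min (\<epsilon> / 4) (r j / 4)"])
  then have "eventually (\<lambda>\<delta>. \<forall>j\<in>{1..m}. \<delta> < \<epsilon> / 4 \<and> \<delta> < r j / 4) (at_right 0)"
    by (intro eventually_ball_finite) auto
  then show ?thesis
  proof eventually_elim
    case (elim \<delta>)
    show ?case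
    proof (intro ballI allI impI)
      fix j z assume j: "j \<in> {1..m}" and z: "r j - 2 * \<delta> \<le> dist (c j) z \<and> dist (c j) z \<le> r j + 2 * \<delta>"
      have "z \<noteq> c j" using z bspec[OF elim j] by auto
      then obtain x where "x \<in> \<Gamma>" "dist x z = \<bar>dist (c j) z - r j\<bar>"
        using nearest_point_on_circle[OF j] by blast
      moreover have "\<bar>dist (c j) z - r j\<bar> < \<epsilon>" using z elim j by auto
      ultimately have "z \<in> (\<Union>x\<in>\<Gamma>. ball x \<epsilon>)" by force
      then show "z \<in> U" using \<epsilon>(2) by blast
    qed
  qed
qed

lemma eventually_annuli_separated:
  "eventually (\<lambda>\<delta>. \<forall>i\<in>{1..m}. \<forall>j\<in>{1..m}. i \<noteq> j \<longrightarrow>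
                     (\<forall>z. dist (c j) z \<le> r j + 2 * \<delta> \<longrightarrow> dist (c i) z > r i + 2 * \<delta>)) (at_right 0)"
proof (intro eventually_ball_finite ballI finite_atLeastAtMost)
  fix i j assume ij: "i \<in> {1..m}" "j \<in> {1..m}"
  define g where "g = dist (c i) (c j) - r i - r j"
  have "i \<noteq> j \<Longrightarrow> g > 0" using dist_centers_gt[OF ij] by (simp add: g_def)
  then have "eventually (\<lambda>\<delta>. i \<noteq> j \<longrightarrow> 4 * \<delta> < g) (at_right 0)"
    by (cases "i = j") (auto simp: eventually_at_right_field intro!: exI[of _ "g / 4"])
  then show "eventually (\<lambda>\<delta>. i \<noteq> j \<longrightarrow> (\<forall>z. dist (c j) z \<le> r j + 2 * \<delta> \<longrightarrow> dist (c i) z > r i + 2 * \<delta>))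
               (at_right 0)"
  proof eventually_elim
    case (elim \<delta>)
    show ?case
    proof (intro impI allI)
      fix z assume "i \<noteq> j" "dist (c j) z \<le> r j + 2 * \<delta>"
      moreover have "dist (c i) (c j) \<le> dist (c i) z + dist (c j) z" by (metis dist_commute dist_triangle)
      ultimately show "dist (c i) z > r i + 2 * \<delta>" using elim by (simp add: g_def)
    qed
  qed
qed

lemma thin_annuli:
  assumes "open U" "\<Gamma> \<subseteq> U"
  obtains \<delta> where "\<delta> > 0" "\<And>j. j \<in> {1..m} \<Longrightarrow> 2 * \<delta> < r j"
    "\<And>j z. j \<in> {1..m} \<Longrightarrow> r j - 2 * \<delta> \<le> dist (c j) z \<Longrightarrow> dist (c j) z \<le> r j + 2 * \<delta> \<Longrightarrow> z \<in> U"
    "\<And>i j z. i \<in> {1..m} \<Longrightarrow> j \<in> {1..m} \<Longrightarrow> i \<noteq> j \<Longrightarrow> dist (c j) z \<le> r j + 2 * \<delta>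
               \<Longrightarrow> dist (c i) z > r i + 2 * \<delta>"
proof -
  have "eventually (\<lambda>\<delta>. 2 * \<delta> < r j) (at_right 0)" if "j \<in> {1..m}" for j
    using r_pos[OF that] by (auto simp: eventually_at_right_field intro!: exI[of _ "r j / 2"])
  then have "eventually (\<lambda>\<delta>. \<forall>j\<in>{1..m}. 2 * \<delta> < r j) (at_right 0)"
    by (intro eventually_ball_finite) auto
  then have "eventually (\<lambda>\<delta>. \<delta> > 0 \<and> (\<forall>j\<in>{1..m}. 2 * \<delta> < r j)
               \<and> (\<forall>j\<in>{1..m}. \<forall>z. r j - 2 * \<delta> \<le> dist (c j) z \<and> dist (c j) z \<le> r j + 2 * \<delta> \<longrightarrow> z \<in> U)
               \<and> (\<forall>i\<in>{1..m}. \<forall>j\<in>{1..m}. i \<noteq> j \<longrightarrow>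
                     (\<forall>z. dist (c j) z \<le> r j + 2 * \<delta> \<longrightarrow> dist (c i) z > r i + 2 * \<delta>))) (at_right 0)"
    using eventually_at_right_less eventually_thin_annuli_subset[OF assms] eventually_annuli_separated
    by eventually_elim blast
  then obtain \<delta> where "\<delta> > 0" "\<forall>j\<in>{1..m}. 2 * \<delta> < r j"
    "\<forall>j\<in>{1..m}. \<forall>z. r j - 2 * \<delta> \<le> dist (c j) z \<and> dist (c j) z \<le> r j + 2 * \<delta> \<longrightarrow> z \<in> U"
    "\<forall>i\<in>{1..m}. \<forall>j\<in>{1..m}. i \<noteq> j \<longrightarrow> (\<forall>z. dist (c j) z \<le> r j + 2 * \<delta> \<longrightarrow> dist (c i) z > r i + 2 * \<delta>)"
    using eventually_happens'[OF trivial_limit_at_right_real] by blast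
  then show ?thesis using that by blast
qed

lemma islimpt_Compl_\<Gamma>:
  assumes "z \<in> \<Gamma>" shows "z islimpt (- \<Gamma>)"
proof -
  obtain j where j: "j \<in> {1..m}" "dist (c j) z = r j" using assms by (auto simp: mem_\<Gamma>_iff)
  have rj: "r j > 0" using r_pos j by auto
  show ?thesis unfolding islimpt_approachable
  proof (intro allI impI)
    fix e :: real assume e: "e > 0"
    define \<tau> where "\<tau> = min (e / 2) (r j / 2)"
    have \<tau>: "\<tau> > 0" "\<tau> < e" "\<tau> < r j" using e rj by (auto simp: \<tau>_def)
    define y where "y = z - of_real (\<tau> / r j) * (z - c j)"
    have eq: "y - c j = of_real (1 - \<tau> / r j) * (z - c j)" by (simp add: y_def algebra_simps)
    have "dist (c j) y = norm (of_real (1 - \<tau> / r j) * (z - c j))"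
      by (simp only: dist_norm norm_minus_commute[of "c j"] eq)
    also have "\<dots> = (1 - \<tau> / r j) * r j"
      by (simp only: norm_mult norm_of_real) (use \<tau> j rj in \<open>simp add: dist_norm norm_minus_commute\<close>)
    also have "\<dots> = r j - \<tau>" using rj by (simp add: field_simps)
    finally have "y \<in> Di" using \<tau> j unfolding mem_Di_iff by force
    then have "y \<in> - \<Gamma>" using \<Gamma>_Int_Di by blast
    moreover have "dist y z = \<tau>"
      using \<tau> j rj by (simp add: y_def dist_norm norm_mult norm_divide norm_minus_commute)
    ultimately show "\<exists>x'\<in>- \<Gamma>. x' \<noteq> z \<and> dist x' z < e" using \<tau> by (intro bexI[of _ y]) auto
  qed
qed

lemma fill_circles_eq_continuous:
  assumes V: "open V" and H: "continuous_on V H" and g: "\<And>x. x \<in> V - \<Gamma> \<Longrightarrow> g x = H x" and z: "z \<in> V"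
  shows "fill_circles c r m g z = H z"
proof (cases "z \<in> \<Gamma>")
  case False then show ?thesis using g z by (simp add: fill_circles_def)
next
  case True
  have nt: "\<not> trivial_limit (at z within - \<Gamma>)"
    using islimpt_Compl_\<Gamma>[OF True] by (simp add: trivial_limit_within)
  have "(H \<longlongrightarrow> H z) (at z within - \<Gamma>)"
    using H V z
      by (meson continuous_on_eq_continuous_at continuous_at_imp_continuous_at_within continuous_within)
  moreover have "eventually (\<lambda>x. H x = g x) (at z within - \<Gamma>)"
    unfolding eventually_at_topological using V z g by (intro exI[of _ V]) auto
  ultimately have "(g \<longlongrightarrow> H z) (at z within - \<Gamma>)" by (rule Lim_transform_eventually)
  then show ?thesis using True nt by (simp add: fill_circles_def tendsto_Lim)
qed

lemma cauchy_sum_conv_cauchy_circle: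
  "cauchy_sum c r m h z = (1 / (2 * pi * \<i>)) * (\<Sum>s\<in>{1..m}. cauchy_circle (c s) (r s) h z)"
  by (simp add: cauchy_sum_def cauchy_circle_def)

lemma holomorphic_on_cauchy_sum:
  assumes "continuous_on \<Gamma> h" shows "cauchy_sum c r m h holomorphic_on (- \<Gamma>)"
proof -
  have "cauchy_circle (c s) (r s) h holomorphic_on (- \<Gamma>)" if s: "s \<in> {1..m}" for s
  proof (rule holomorphic_on_subset[OF holomorphic_on_cauchy_circle])
    show "continuous_on (sphere (c s) (r s)) h"
      using assms sphere_subset_\<Gamma>[OF s] by (rule continuous_on_subset)
  qed (use r_pos s sphere_subset_\<Gamma>[OF s] in auto)
  then show ?thesis unfolding cauchy_sum_conv_cauchy_circle by (intro holomorphic_intros) auto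
qed

lemma decay_contour_integral_cauchy_power:
  assumes h: "continuous_on \<Gamma> h" and s: "s \<in> {1..m}"
  shows "decay k (\<lambda>z. contour_integral (circlepath (c s) (r s)) (\<lambda>p. h p / (p - z) ^ k))"
proof -
  obtain M where M: "M \<ge> 0" "\<And>p. p \<in> \<Gamma> \<Longrightarrow> norm (h p) \<le> M"
    using continuous_on_compact_bound[OF compact_\<Gamma> h] by blast
  have rs: "r s > 0" using r_pos s by auto
  have hs: "continuous_on (sphere (c s) (r s)) h" using h sphere_subset_\<Gamma>[OF s] by (rule continuous_on_subset)
  have "eventually (\<lambda>z. norm (contour_integral (circlepath (c s) (r s)) (\<lambda>p. h p / (p - z) ^ k))
          \<le> (M * 2 ^ k * (2 * pi * r s)) / norm z ^ k) at_infinity"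
    using eventually_norm_ge_at_infinity[of "2 * R0"]
  proof eventually_elim
    case (elim z)
    have d: "norm (p - z) \<ge> norm z / 2" if "p \<in> sphere (c s) (r s)" for p
    proof -
      have "norm p < R0" using norm_less_R0_if_\<Gamma> sphere_subset_\<Gamma>[OF s] that by blast
      moreover have "norm z - norm p \<le> norm (p - z)" by (metis norm_minus_commute norm_triangle_ineq2)
      ultimately show ?thesis using elim by linarith
    qed
    have "norm (contour_integral (circlepath (c s) (r s)) (\<lambda>p. h p / (p - z) ^ k))
            \<le> M / (norm z / 2) ^ k * (2 * pi * r s)"
      by (rule norm_contour_integral_cauchy_power_le[OF hs rs M(1)])
         (use elim R0_ge_1 d M(2) sphere_subset_\<Gamma>[OF s] in auto)
    also have "\<dots> = (M * 2 ^ k * (2 * pi * r s)) / norm z ^ k" by (simp add: power_divide field_simps)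
    finally show ?case .
  qed
  then show ?thesis by (auto simp: decay_def)
qed

lemma decay_cauchy_sum:
  assumes "continuous_on \<Gamma> h" shows "decay 1 (cauchy_sum c r m h)"
  unfolding cauchy_sum_def
  using decay_contour_integral_cauchy_power[OF assms, of _ 1] by (intro decay_cmult decay_sum) auto

lemma cauchy_sum_tendsto_0:
  assumes "continuous_on \<Gamma> h" shows "(cauchy_sum c r m h \<longlongrightarrow> 0) at_infinity"
  using decay_tendsto_0[OF decay_cauchy_sum[OF assms]] by simp

context
  fixes h U \<delta>
  assumes U: "open U" "\<Gamma> \<subseteq> U" and h: "h holomorphic_on U" and \<delta>: "\<delta> > 0"
    and \<delta>_r: "\<And>j. j \<in> {1..m} \<Longrightarrow> 2 * \<delta> < r j"
    and \<delta>_U: "\<And>j z. j \<in> {1..m} \<Longrightarrow> r j - 2 * \<delta> \<le> dist (c j) z \<Longrightarrow> dist (c j) z \<le> r j + 2 * \<delta> \<Longrightarrow> z \<in> U"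
    and \<delta>_sep: "\<And>i j z. i \<in> {1..m} \<Longrightarrow> j \<in> {1..m} \<Longrightarrow> i \<noteq> j \<Longrightarrow> dist (c j) z \<le> r j + 2 * \<delta>
                 \<Longrightarrow> dist (c i) z > r i + 2 * \<delta>"
begin

lemma continuous_on_sphere_enlarged:
  assumes "s \<in> {1..m}" "\<rho> \<in> {r s, r s + \<delta>}"
  shows "continuous_on (sphere (c s) \<rho>) h"
  by (rule continuous_on_subset[OF holomorphic_on_imp_continuous_on[OF h]])
     (use assms \<delta> \<delta>_U[OF assms(1)] in auto)

text \<open>Pushing the \<open>j\<close>-th contour outward by \<open>\<delta>\<close> absorbs the jump of the Cauchy integral
  across the \<open>j\<close>-th circle.\<close>
lemma cauchy_sum_near_circle:
  assumes j: "j \<in> {1..m}" and z: "r j - \<delta> < dist (c j) z" "dist (c j) z < r j + \<delta>" "z \<notin> \<Gamma>"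
  shows "cauchy_sum c r m h z + (if z \<in> De then h z else 0)
           = (1 / (2 * pi * \<i>)) * (\<Sum>s\<in>{1..m}. cauchy_circle (c s) (if s = j then r s + \<delta> else r s) h z)"
proof -
  have dz: "dist (c j) z \<noteq> r j" using z sphere_subset_\<Gamma>[OF j] by auto
  have ann: "cauchy_circle (c j) (r j + \<delta>) h z
               = cauchy_circle (c j) (r j) h z + (if dist (c j) z > r j then 2 * pi * \<i> * h z else 0)"
    by (rule cauchy_circle_annulus[OF h U(1) r_pos[OF j]])
       (use \<delta> \<delta>_U[OF j] z dz in auto)
  have De_iff: "z \<in> De \<longleftrightarrow> dist (c j) z > r j"
  proof
    assume gt: "dist (c j) z > r j"
    have "dist (c s) z > r s" if s: "s \<in> {1..m}" for s
      using \<delta>_sep[OF s j, of z] \<delta> gt z by (cases "s = j") auto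
    then show "z \<in> De" by (simp add: mem_De_iff)
  qed (use j in \<open>auto simp: mem_De_iff\<close>)
  have "(\<Sum>s\<in>{1..m}. cauchy_circle (c s) (if s = j then r s + \<delta> else r s) h z)
          = (\<Sum>s\<in>{1..m}. cauchy_circle (c s) (r s) h z) + (cauchy_circle (c j) (r j + \<delta>) h z - cauchy_circle (c j) (r j) h z)"
    using j by (simp add: sum.remove[of _ j] if_distrib sum.If_cases)
  then show ?thesis
    unfolding cauchy_sum_conv_cauchy_circle using ann De_iff by (simp add: algebra_simps)
qed

lemma holomorphic_near_circle:
  assumes j: "j \<in> {1..m}"
  shows "(\<lambda>z. (1 / (2 * pi * \<i>)) * (\<Sum>s\<in>{1..m}. cauchy_circle (c s) (if s = j then r s + \<delta> else r s) h z))
           holomorphic_on {z. r j - \<delta> < dist (c j) z \<and> dist (c j) z < r j + \<delta>}"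
proof -
  have "cauchy_circle (c s) (if s = j then r s + \<delta> else r s) h
          holomorphic_on {z. r j - \<delta> < dist (c j) z \<and> dist (c j) z < r j + \<delta>}" if s: "s \<in> {1..m}" for s
  proof (rule holomorphic_on_subset[OF holomorphic_on_cauchy_circle])
    show "continuous_on (sphere (c s) (if s = j then r s + \<delta> else r s)) h"
      using continuous_on_sphere_enlarged[OF s] by auto
    show "0 < (if s = j then r s + \<delta> else r s)" using r_pos[OF s] \<delta> by auto
    show "{z. r j - \<delta> < dist (c j) z \<and> dist (c j) z < r j + \<delta>} \<subseteq> - sphere (c s) (if s = j then r s + \<delta> else r s)"
    proof (cases "s = j")
      case False
      have "dist (c s) z > r s + 2 * \<delta>" if "dist (c j) z < r j + \<delta>" for z
        using \<delta>_sep[OF s j False, of z] that \<delta> by auto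
      then show ?thesis using False \<delta> by force
    qed auto
  qed
  then show ?thesis by (intro holomorphic_intros) auto
qed

end

lemma plus_part_extension:
  assumes U: "open U" "\<Gamma> \<subseteq> U" and h: "h holomorphic_on U"
  obtains V H where "open V" "\<Gamma> \<subseteq> V" "V \<subseteq> U" "H holomorphic_on V"
    "\<And>z. z \<in> V - \<Gamma> \<Longrightarrow> H z = cauchy_sum c r m h z + (if z \<in> De then h z else 0)"
proof -
  obtain \<delta> where \<delta>: "\<delta> > 0" "\<And>j. j \<in> {1..m} \<Longrightarrow> 2 * \<delta> < r j"
    "\<And>j z. j \<in> {1..m} \<Longrightarrow> r j - 2 * \<delta> \<le> dist (c j) z \<Longrightarrow> dist (c j) z \<le> r j + 2 * \<delta> \<Longrightarrow> z \<in> U"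
    "\<And>i j z. i \<in> {1..m} \<Longrightarrow> j \<in> {1..m} \<Longrightarrow> i \<noteq> j \<Longrightarrow> dist (c j) z \<le> r j + 2 * \<delta> \<Longrightarrow> dist (c i) z > r i + 2 * \<delta>"
    using thin_annuli[OF U] by blast
  define A where "A j = {z. r j - \<delta> < dist (c j) z \<and> dist (c j) z < r j + \<delta>}" for j
  define H where "H z = (1 / (2 * pi * \<i>)) * (\<Sum>s\<in>{1..m}. cauchy_circle (c s) (if z \<in> A s then r s + \<delta> else r s) h z)" for z
  have A_disj: "z \<notin> A s" if "z \<in> A j" "j \<in> {1..m}" "s \<in> {1..m}" "s \<noteq> j" for z j s
    using \<delta>(1) \<delta>(4)[OF that(3,2,4), of z] that(1) by (auto simp: A_def)
  have H_A: "H z = (1 / (2 * pi * \<i>)) * (\<Sum>s\<in>{1..m}. cauchy_circle (c s) (if s = j then r s + \<delta> else r s) h z)"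
    if "j \<in> {1..m}" "z \<in> A j" for j z
    unfolding H_def using A_disj[OF that(2,1)] that by (intro arg_cong[where f = "(*) _"] sum.cong) auto
  show ?thesis
  proof
    show "open (\<Union>j\<in>{1..m}. A j)" unfolding A_def
      by (intro open_UN ballI open_Collect_conj open_Collect_less continuous_intros)
    show "\<Gamma> \<subseteq> (\<Union>j\<in>{1..m}. A j)" using \<delta>(1) by (force simp: mem_\<Gamma>_iff A_def)
    show "(\<Union>j\<in>{1..m}. A j) \<subseteq> U" using \<delta>(1) \<delta>(3) by (force simp: A_def)
    show "H holomorphic_on (\<Union>j\<in>{1..m}. A j)"
    proof (rule holomorphic_on_UN_open)
      fix j assume j: "j \<in> {1..m}"
      have "H holomorphic_on {z. r j - \<delta> < dist (c j) z \<and> dist (c j) z < r j + \<delta>}"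
        by (rule holomorphic_transform[OF holomorphic_near_circle[OF U h \<delta>(1-4) j]])
           (use H_A[OF j] in \<open>auto simp: A_def\<close>)
      then show "H holomorphic_on A j" by (simp add: A_def)
      show "open (A j)" unfolding A_def by (intro open_Collect_conj open_Collect_less continuous_intros)
    qed
    show "H z = cauchy_sum c r m h z + (if z \<in> De then h z else 0)" if z: "z \<in> (\<Union>j\<in>{1..m}. A j) - \<Gamma>" for z
    proof -
      obtain j where j: "j \<in> {1..m}" "z \<in> A j" "z \<notin> \<Gamma>" using z by auto
      show ?thesis unfolding H_A[OF j(1,2)]
        by (rule cauchy_sum_near_circle[OF U h \<delta>(1-4) j(1), symmetric]) (use j in \<open>auto simp: A_def\<close>)
    qed
  qed
qed

lemma plus_part_Di: "z \<in> Di \<Longrightarrow> PP h z = cauchy_sum c r m h z"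
  using \<Gamma>_Int_Di Di_Int_De by (auto simp: plus_part_def fill_circles_def)

lemma plus_part_De: "z \<in> De \<Longrightarrow> PP h z = cauchy_sum c r m h z + h z"
  using \<Gamma>_Int_De by (auto simp: plus_part_def fill_circles_def)

lemma minus_part_Di: "z \<in> Di \<Longrightarrow> NN h z = - cauchy_sum c r m h z + h z"
  using \<Gamma>_Int_Di by (auto simp: minus_part_def fill_circles_def)

lemma minus_part_De: "z \<in> De \<Longrightarrow> NN h z = - cauchy_sum c r m h z"
  using \<Gamma>_Int_De Di_Int_De by (auto simp: minus_part_def fill_circles_def)

lemma plus_minus_part_near_\<Gamma>:
  assumes U: "open U" "\<Gamma> \<subseteq> U" and h: "h holomorphic_on U"
  obtains V where "open V" "\<Gamma> \<subseteq> V" "V \<subseteq> U"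
    "PP h holomorphic_on V" "NN h holomorphic_on V"
    "\<And>z. z \<in> V \<Longrightarrow> PP h z + NN h z = h z"
proof -
  obtain V H where V: "open V" "\<Gamma> \<subseteq> V" "V \<subseteq> U" "H holomorphic_on V"
    and H: "\<And>z. z \<in> V - \<Gamma> \<Longrightarrow> H z = cauchy_sum c r m h z + (if z \<in> De then h z else 0)"
    using plus_part_extension[OF U h] by blast
  have Hc: "continuous_on V H" using V(4) holomorphic_on_imp_continuous_on by blast
  have hV: "h holomorphic_on V" using h V(3) holomorphic_on_subset by blast
  have P: "PP h z = H z" if "z \<in> V" for z
    unfolding plus_part_def by (rule fill_circles_eq_continuous[OF V(1) Hc _ that]) (use H in auto)
  have N: "NN h z = h z - H z" if "z \<in> V" for z
    unfolding minus_part_def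
  proof (rule fill_circles_eq_continuous[OF V(1) _ _ that])
    show "continuous_on V (\<lambda>z. h z - H z)"
      using holomorphic_on_imp_continuous_on[OF hV] Hc by (intro continuous_intros)
    fix x assume x: "x \<in> V - \<Gamma>"
    then have "x \<in> Di \<or> x \<in> De" using \<Gamma>_Un_Di_Un_De by blast
    then show "- cauchy_sum c r m h x + (if x \<in> Di then h x else 0) = h x - H x"
      using H[OF x] Di_Int_De by auto
  qed
  show ?thesis
  proof (rule that[OF V(1,2,3)])
    show "PP h holomorphic_on V" by (rule holomorphic_transform[OF V(4)]) (simp add: P)
    show "NN h holomorphic_on V"
      by (rule holomorphic_transform[OF holomorphic_on_diff[OF hV V(4)]]) (simp add: N)
    show "PP h z + NN h z = h z" if "z \<in> V" for z
      using P[OF that] N[OF that] by simp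
  qed
qed

lemma holomorphic_on_plus_part_Di:
  assumes "continuous_on \<Gamma> h" and "T \<subseteq> Di" shows "PP h holomorphic_on T"
proof (rule holomorphic_transform)
  show "cauchy_sum c r m h holomorphic_on T"
    using holomorphic_on_cauchy_sum[OF assms(1)] assms(2) \<Gamma>_Int_Di by (elim holomorphic_on_subset) blast
qed (use assms(2) in \<open>auto simp: plus_part_Di\<close>)

lemma holomorphic_on_minus_part_De:
  assumes "continuous_on \<Gamma> h" and "T \<subseteq> De" shows "NN h holomorphic_on T"
proof (rule holomorphic_transform)
  show "(\<lambda>z. - cauchy_sum c r m h z) holomorphic_on T"
    using holomorphic_on_cauchy_sum[OF assms(1)] assms(2) \<Gamma>_Int_De
    by (intro holomorphic_intros) (elim holomorphic_on_subset, blast)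
qed (use assms(2) in \<open>auto simp: minus_part_De\<close>)

lemma holomorphic_on_plus_part_De:
  assumes "continuous_on \<Gamma> h" "h holomorphic_on T" and "T \<subseteq> De" shows "PP h holomorphic_on T"
proof (rule holomorphic_transform)
  show "(\<lambda>z. cauchy_sum c r m h z + h z) holomorphic_on T"
    using holomorphic_on_cauchy_sum[OF assms(1)] assms(2,3) \<Gamma>_Int_De
    by (intro holomorphic_intros) (elim holomorphic_on_subset, blast)+
qed (use assms(3) in \<open>auto simp: plus_part_De\<close>)

lemma holomorphic_on_minus_part_Di:
  assumes "continuous_on \<Gamma> h" "h holomorphic_on T" and "T \<subseteq> Di" shows "NN h holomorphic_on T"
proof (rule holomorphic_transform)
  show "(\<lambda>z. - cauchy_sum c r m h z + h z) holomorphic_on T"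
    using holomorphic_on_cauchy_sum[OF assms(1)] assms(2,3) \<Gamma>_Int_Di
    by (intro holomorphic_intros) (elim holomorphic_on_subset, blast)+
qed (use assms(3) in \<open>auto simp: minus_part_Di\<close>)

lemma holomorphic_on_UNIV_minus_part:
  assumes W: "open W" "\<Gamma> \<subseteq> W" "Di \<subseteq> W" and h: "h holomorphic_on W"
  shows "NN h holomorphic_on UNIV"
proof -
  obtain V where V: "open V" "\<Gamma> \<subseteq> V" "V \<subseteq> W" "NN h holomorphic_on V"
    using plus_minus_part_near_\<Gamma>[OF W(1,2) h] by metis
  have hc: "continuous_on \<Gamma> h"
    using holomorphic_on_imp_continuous_on[OF h] W(2) continuous_on_subset by blast
  have "NN h holomorphic_on (V \<union> Di \<union> De)"
    using V holomorphic_on_minus_part_Di[OF hc holomorphic_on_subset[OF h W(3)]]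
      holomorphic_on_minus_part_De[OF hc] open_Di open_De
    by (intro holomorphic_on_Un) auto
  moreover have "V \<union> Di \<union> De = UNIV" using V(2) \<Gamma>_Un_Di_Un_De by blast
  ultimately show ?thesis by simp
qed

lemma holomorphic_on_UNIV_plus_part:
  assumes W: "open W" "\<Gamma> \<subseteq> W" "De \<subseteq> W" and h: "h holomorphic_on W"
  shows "PP h holomorphic_on UNIV"
proof -
  obtain V where V: "open V" "\<Gamma> \<subseteq> V" "V \<subseteq> W" "PP h holomorphic_on V"
    using plus_minus_part_near_\<Gamma>[OF W(1,2) h] by metis
  have hc: "continuous_on \<Gamma> h"
    using holomorphic_on_imp_continuous_on[OF h] W(2) continuous_on_subset by blast
  have "PP h holomorphic_on (V \<union> Di \<union> De)"
    using V holomorphic_on_plus_part_Di[OF hc] holomorphic_on_plus_part_De[OF hc holomorphic_on_subset[OF h W(3)]]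
      open_Di open_De
    by (intro holomorphic_on_Un) auto
  moreover have "V \<union> Di \<union> De = UNIV" using V(2) \<Gamma>_Un_Di_Un_De by blast
  ultimately show ?thesis by simp
qed

lemma minus_part_eq_0:
  assumes W: "open W" "\<Gamma> \<subseteq> W" "Di \<subseteq> W" and h: "h holomorphic_on W"
  shows "NN h z = 0"
proof (rule Liouville_weak_0[OF holomorphic_on_UNIV_minus_part[OF W h]])
  have hc: "continuous_on \<Gamma> h"
    using holomorphic_on_imp_continuous_on[OF h] W(2) continuous_on_subset by blast
  have "((\<lambda>z. - cauchy_sum c r m h z) \<longlongrightarrow> 0) at_infinity"
    using tendsto_minus[OF cauchy_sum_tendsto_0[OF hc]] by simp
  moreover have "eventually (\<lambda>z. - cauchy_sum c r m h z = NN h z) at_infinity"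
    using eventually_De_at_infinity by eventually_elim (simp add: minus_part_De)
  ultimately show "(NN h \<longlongrightarrow> 0) at_infinity" by (rule Lim_transform_eventually)
qed

lemma plus_part_eq_0:
  assumes W: "open W" "\<Gamma> \<subseteq> W" "De \<subseteq> W" and h: "h holomorphic_on W"
    and lim: "(h \<longlongrightarrow> 0) at_infinity"
  shows "PP h z = 0"
proof (rule Liouville_weak_0[OF holomorphic_on_UNIV_plus_part[OF W h]])
  have hc: "continuous_on \<Gamma> h"
    using holomorphic_on_imp_continuous_on[OF h] W(2) continuous_on_subset by blast
  have "((\<lambda>z. cauchy_sum c r m h z + h z) \<longlongrightarrow> 0) at_infinity"
    using tendsto_add[OF cauchy_sum_tendsto_0[OF hc] lim] by simp
  moreover have "eventually (\<lambda>z. cauchy_sum c r m h z + h z = PP h z) at_infinity"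
    using eventually_De_at_infinity by eventually_elim (simp add: plus_part_De)
  ultimately show "(PP h \<longlongrightarrow> 0) at_infinity" by (rule Lim_transform_eventually)
qed


lemma mem_\<H>_iff: "h \<in> \<H> \<longleftrightarrow> (\<exists>U. open U \<and> \<Gamma> \<subseteq> U \<and> h holomorphic_on U)"
  by (simp add: Hgerm_def)

lemma continuous_on_\<Gamma>_if_\<H>: "h \<in> \<H> \<Longrightarrow> continuous_on \<Gamma> h"
  unfolding mem_\<H>_iff using holomorphic_on_imp_continuous_on continuous_on_subset by blast

lemma \<H>_binop:
  assumes "f \<in> \<H>" "g \<in> \<H>" and op: "\<And>U. f holomorphic_on U \<Longrightarrow> g holomorphic_on U \<Longrightarrow> F holomorphic_on U"
  shows "F \<in> \<H>"
proof -
  obtain U1 U2 where U: "open U1" "\<Gamma> \<subseteq> U1" "f holomorphic_on U1" "open U2" "\<Gamma> \<subseteq> U2" "g holomorphic_on U2"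
    using assms(1,2) by (auto simp: mem_\<H>_iff)
  then have "F holomorphic_on U1 \<inter> U2" by (intro op) (auto elim: holomorphic_on_subset)
  then show ?thesis using U unfolding mem_\<H>_iff by (intro exI[of _ "U1 \<inter> U2"]) auto
qed

lemma \<H>_add: "f \<in> \<H> \<Longrightarrow> g \<in> \<H> \<Longrightarrow> (\<lambda>z. f z + g z) \<in> \<H>"
  by (rule \<H>_binop[of f g]) (auto intro: holomorphic_intros)

lemma \<H>_diff: "f \<in> \<H> \<Longrightarrow> g \<in> \<H> \<Longrightarrow> (\<lambda>z. f z - g z) \<in> \<H>"
  by (rule \<H>_binop[of f g]) (auto intro: holomorphic_intros)

lemma \<H>_mult: "f \<in> \<H> \<Longrightarrow> g \<in> \<H> \<Longrightarrow> (\<lambda>z. f z * g z) \<in> \<H>"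
  by (rule \<H>_binop[of f g]) (auto intro: holomorphic_intros)

lemma \<H>_uminus: "f \<in> \<H> \<Longrightarrow> (\<lambda>z. - f z) \<in> \<H>"
  by (rule \<H>_binop[of f f]) (auto intro: holomorphic_intros)

lemma \<H>_cmult: "f \<in> \<H> \<Longrightarrow> (\<lambda>z. k * f z) \<in> \<H>"
  by (rule \<H>_binop[of f f]) (auto intro: holomorphic_intros)

lemma plus_minus_part_holomorphic_extensions:
  assumes "h \<in> \<H>"
  obtains W where "open W" "\<Gamma> \<subseteq> W" "PP h holomorphic_on (W \<union> Di)" "NN h holomorphic_on (W \<union> De)"
    "\<And>z. z \<in> W \<Longrightarrow> PP h z + NN h z = h z"
proof -
  obtain U where U: "open U" "\<Gamma> \<subseteq> U" "h holomorphic_on U" using assms by (auto simp: mem_\<H>_iff)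
  obtain V where V: "open V" "\<Gamma> \<subseteq> V" "PP h holomorphic_on V" "NN h holomorphic_on V"
    "\<And>z. z \<in> V \<Longrightarrow> PP h z + NN h z = h z"
    using plus_minus_part_near_\<Gamma>[OF U] by metis
  have hc: "continuous_on \<Gamma> h" using continuous_on_\<Gamma>_if_\<H>[OF assms] .
  show ?thesis
  proof (rule that[OF V(1,2) _ _ V(5)])
    show "PP h holomorphic_on (V \<union> Di)"
      using V holomorphic_on_plus_part_Di[OF hc order_refl] open_Di by (intro holomorphic_on_Un)
    show "NN h holomorphic_on (V \<union> De)"
      using V holomorphic_on_minus_part_De[OF hc order_refl] open_De by (intro holomorphic_on_Un)
  qed
qed

lemma \<H>_plus_part: "h \<in> \<H> \<Longrightarrow> PP h \<in> \<H>"
  by (erule plus_minus_part_holomorphic_extensions) (auto simp: mem_\<H>_iff intro: holomorphic_on_subset)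

lemma \<H>_minus_part: "h \<in> \<H> \<Longrightarrow> NN h \<in> \<H>"
  by (erule plus_minus_part_holomorphic_extensions) (auto simp: mem_\<H>_iff intro: holomorphic_on_subset)

lemma plus_part_add_minus_part:
  assumes h: "h \<in> \<H>" shows "PP h z + NN h z = h z"
proof -
  obtain W where W: "\<Gamma> \<subseteq> W" "\<And>z. z \<in> W \<Longrightarrow> PP h z + NN h z = h z"
    using plus_minus_part_holomorphic_extensions[OF h] by metis
  consider "z \<in> \<Gamma>" | "z \<in> Di" | "z \<in> De" using \<Gamma>_Un_Di_Un_De by blast
  then show ?thesis
  proof cases
    case 1 then show ?thesis using W by blast
  next
    case 2 then show ?thesis by (simp add: plus_part_Di minus_part_Di)
  next
    case 3 then show ?thesis by (simp add: plus_part_De minus_part_De)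
  qed
qed

lemma cauchy_sum_lincomb:
  assumes f: "continuous_on \<Gamma> f" and g: "continuous_on \<Gamma> g" and z: "z \<notin> \<Gamma>"
  shows "cauchy_sum c r m (\<lambda>x. k1 * f x + k2 * g x) z = k1 * cauchy_sum c r m f z + k2 * cauchy_sum c r m g z"
proof -
  have "contour_integral (circlepath (c s) (r s)) (\<lambda>p. (k1 * f p + k2 * g p) / (p - z))
          = k1 * contour_integral (circlepath (c s) (r s)) (\<lambda>p. f p / (p - z))
            + k2 * contour_integral (circlepath (c s) (r s)) (\<lambda>p. g p / (p - z))"
    if s: "s \<in> {1..m}" for s
  proof -
    have zs: "z \<notin> sphere (c s) (r s)" using z sphere_subset_\<Gamma>[OF s] by auto
    have i: "(\<lambda>p. f p / (p - z)) contour_integrable_on (circlepath (c s) (r s))"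
      "(\<lambda>p. g p / (p - z)) contour_integrable_on (circlepath (c s) (r s))"
      using contour_integrable_circlepath_cauchy[OF continuous_on_subset[OF f sphere_subset_\<Gamma>[OF s]] r_pos[OF s] zs, of 1]
        contour_integrable_circlepath_cauchy[OF continuous_on_subset[OF g sphere_subset_\<Gamma>[OF s]] r_pos[OF s] zs, of 1]
      by simp_all
    have "contour_integral (circlepath (c s) (r s)) (\<lambda>p. (k1 * f p + k2 * g p) / (p - z))
            = contour_integral (circlepath (c s) (r s)) (\<lambda>p. k1 * (f p / (p - z)) + k2 * (g p / (p - z)))"
      by (simp add: add_divide_distrib)
    also have "\<dots> = k1 * contour_integral (circlepath (c s) (r s)) (\<lambda>p. f p / (p - z))
                      + k2 * contour_integral (circlepath (c s) (r s)) (\<lambda>p. g p / (p - z))"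
      using i by (simp only: contour_integral_add contour_integrable_lmul contour_integral_lmul)
    finally show ?thesis .
  qed
  then show ?thesis unfolding cauchy_sum_def by (simp add: sum.distrib sum_distrib_left algebra_simps)
qed

lemma plus_part_lincomb:
  assumes f: "f \<in> \<H>" and g: "g \<in> \<H>"
  shows "PP (\<lambda>x. k1 * f x + k2 * g x) z = k1 * PP f z + k2 * PP g z"
proof -
  have fc: "continuous_on \<Gamma> f" and gc: "continuous_on \<Gamma> g" using f g continuous_on_\<Gamma>_if_\<H> by auto
  have off: "PP h x = cauchy_sum c r m h x + (if x \<in> De then h x else 0)" if "x \<notin> \<Gamma>" for h x
    using that by (simp add: plus_part_def fill_circles_def)
  obtain W1 W2 where W: "open W1" "\<Gamma> \<subseteq> W1" "PP f holomorphic_on (W1 \<union> Di)"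
    "open W2" "\<Gamma> \<subseteq> W2" "PP g holomorphic_on (W2 \<union> Di)"
    using plus_minus_part_holomorphic_extensions[OF f] plus_minus_part_holomorphic_extensions[OF g] by metis
  show ?thesis
  proof (cases "z \<in> \<Gamma>")
    case True
    have "PP (\<lambda>x. k1 * f x + k2 * g x) z = fill_circles c r m
            (\<lambda>x. cauchy_sum c r m (\<lambda>x. k1 * f x + k2 * g x) x + (if x \<in> De then k1 * f x + k2 * g x else 0)) z"
      by (simp only: plus_part_def)
    also have "\<dots> = k1 * PP f z + k2 * PP g z"
    proof (rule fill_circles_eq_continuous[of "W1 \<inter> W2"])
      have "(\<lambda>x. k1 * PP f x + k2 * PP g x) holomorphic_on (W1 \<inter> W2)"
        using W by (intro holomorphic_intros) (auto elim!: holomorphic_on_subset)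
      then show "continuous_on (W1 \<inter> W2) (\<lambda>x. k1 * PP f x + k2 * PP g x)"
        by (rule holomorphic_on_imp_continuous_on)
      show "cauchy_sum c r m (\<lambda>x. k1 * f x + k2 * g x) x + (if x \<in> De then k1 * f x + k2 * g x else 0)
              = k1 * PP f x + k2 * PP g x" if "x \<in> W1 \<inter> W2 - \<Gamma>" for x
        using that by (simp add: off cauchy_sum_lincomb[OF fc gc] algebra_simps)
    qed (use W True in auto)
    finally show ?thesis .
  qed (simp add: off cauchy_sum_lincomb[OF fc gc] algebra_simps)
qed

lemma minus_part_eq: "h \<in> \<H> \<Longrightarrow> NN h z = h z - PP h z"
  using plus_part_add_minus_part by (simp add: eq_diff_eq add.commute)

lemma plus_part_eq: "h \<in> \<H> \<Longrightarrow> PP h z = h z - NN h z"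
  using plus_part_add_minus_part by (simp add: eq_diff_eq)

lemma minus_part_lincomb:
  assumes f: "f \<in> \<H>" and g: "g \<in> \<H>"
  shows "NN (\<lambda>x. k1 * f x + k2 * g x) z = k1 * NN f z + k2 * NN g z"
proof -
  have "NN (\<lambda>x. k1 * f x + k2 * g x) z = k1 * f z + k2 * g z - PP (\<lambda>x. k1 * f x + k2 * g x) z"
    using minus_part_eq[OF \<H>_add[OF \<H>_cmult[OF f] \<H>_cmult[OF g]]] .
  also have "\<dots> = k1 * (f z - PP f z) + k2 * (g z - PP g z)"
    unfolding plus_part_lincomb[OF f g] by (simp add: algebra_simps)
  finally show ?thesis unfolding minus_part_eq[OF f] minus_part_eq[OF g] .
qed

lemma minus_part_add: "f \<in> \<H> \<Longrightarrow> g \<in> \<H> \<Longrightarrow> NN (\<lambda>x. f x + g x) z = NN f z + NN g z"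
  using minus_part_lincomb[of f g 1 1] by simp

lemma minus_part_diff: "f \<in> \<H> \<Longrightarrow> g \<in> \<H> \<Longrightarrow> NN (\<lambda>x. f x - g x) z = NN f z - NN g z"
  using minus_part_lincomb[of f g 1 "-1"] by simp

lemma decay_minus_part: assumes "h \<in> \<H>" shows "decay 1 (NN h)"
proof (rule decay_cong)
  show "decay 1 (\<lambda>z. - cauchy_sum c r m h z)"
    using decay_uminus[OF decay_cauchy_sum[OF continuous_on_\<Gamma>_if_\<H>[OF assms]]] .
  show "eventually (\<lambda>z. - cauchy_sum c r m h z = NN h z) at_infinity"
    using eventually_De_at_infinity by eventually_elim (simp add: minus_part_De)
qed

lemma minus_part_mult_plus_parts:
  assumes f: "f \<in> \<H>" and g: "g \<in> \<H>"
  shows "NN (\<lambda>x. PP f x * PP g x) z = 0"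
proof -
  obtain W1 W2 where "open W1" "\<Gamma> \<subseteq> W1" "PP f holomorphic_on (W1 \<union> Di)"
    "open W2" "\<Gamma> \<subseteq> W2" "PP g holomorphic_on (W2 \<union> Di)"
    using plus_minus_part_holomorphic_extensions[OF f] plus_minus_part_holomorphic_extensions[OF g] by metis
  then show ?thesis
    by (intro minus_part_eq_0[of "(W1 \<inter> W2) \<union> Di"] holomorphic_on_mult)
       (auto elim: holomorphic_on_subset intro: open_Di)
qed

lemma plus_part_mult_minus_parts:
  assumes f: "f \<in> \<H>" and g: "g \<in> \<H>"
  shows "PP (\<lambda>x. NN f x * NN g x) z = 0"
proof -
  obtain W1 W2 where "open W1" "\<Gamma> \<subseteq> W1" "NN f holomorphic_on (W1 \<union> De)"
    "open W2" "\<Gamma> \<subseteq> W2" "NN g holomorphic_on (W2 \<union> De)"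
    using plus_minus_part_holomorphic_extensions[OF f] plus_minus_part_holomorphic_extensions[OF g] by metis
  moreover have "((\<lambda>x. NN f x * NN g x) \<longlongrightarrow> 0) at_infinity"
    using decay_mult[OF decay_minus_part[OF f] decay_minus_part[OF g]] by (rule decay_tendsto_0) simp
  ultimately show ?thesis
    by (intro plus_part_eq_0[of "(W1 \<inter> W2) \<union> De"] holomorphic_on_mult)
       (auto elim: holomorphic_on_subset intro: open_De)
qed

lemma minus_part_mult_minus_parts:
  "f \<in> \<H> \<Longrightarrow> g \<in> \<H> \<Longrightarrow> NN (\<lambda>x. NN f x * NN g x) z = NN f z * NN g z"
  using plus_part_add_minus_part[OF \<H>_mult[OF \<H>_minus_part \<H>_minus_part], of f g z]
    plus_part_mult_minus_parts[of f g z] by simp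

section \<open>Integrals over the circles\<close>

definition circles_integral :: "(complex \<Rightarrow> complex) \<Rightarrow> complex" where
  "circles_integral h = (\<Sum>s\<in>{1..m}. contour_integral (circlepath (c s) (r s)) h)"

lemma circles_integral_cong:
  assumes "\<And>p. p \<in> \<Gamma> \<Longrightarrow> f p = g p" shows "circles_integral f = circles_integral g"
  unfolding circles_integral_def
proof (intro sum.cong refl contour_integral_eq)
  fix s x assume "s \<in> {1..m}" "x \<in> path_image (circlepath (c s) (r s))"
  then have "x \<in> \<Gamma>" using sphere_subset_\<Gamma> r_pos by fastforce
  then show "f x = g x" using assms by simp
qed

lemma circles_integral_lincomb:
  assumes f: "continuous_on \<Gamma> f" and g: "continuous_on \<Gamma> g"
  shows "circles_integral (\<lambda>x. k1 * f x + k2 * g x) = k1 * circles_integral f + k2 * circles_integral g"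
proof -
  have "contour_integral (circlepath (c s) (r s)) (\<lambda>x. k1 * f x + k2 * g x)
          = k1 * contour_integral (circlepath (c s) (r s)) f + k2 * contour_integral (circlepath (c s) (r s)) g"
    if s: "s \<in> {1..m}" for s
  proof -
    have "f contour_integrable_on (circlepath (c s) (r s))" "g contour_integrable_on (circlepath (c s) (r s))"
      using f g sphere_subset_\<Gamma>[OF s] r_pos[OF s]
      by (auto intro!: contour_integrable_circlepath elim: continuous_on_subset)
    then show ?thesis by (simp add: contour_integral_add contour_integrable_lmul contour_integral_lmul)
  qed
  then show ?thesis unfolding circles_integral_def by (simp add: sum.distrib sum_distrib_left)
qed

lemma circles_integral_eq_0:
  assumes W: "open W" "\<Gamma> \<subseteq> W" "Di \<subseteq> W" and h: "h holomorphic_on W"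
  shows "circles_integral h = 0"
proof -
  have "contour_integral (circlepath (c s) (r s)) h = 0" if s: "s \<in> {1..m}" for s
  proof (rule contour_integral_unique[OF Cauchy_theorem_global[OF W(1) h]])
    show "path_image (circlepath (c s) (r s)) \<subseteq> W" using sphere_subset_\<Gamma>[OF s] W r_pos[OF s] by auto
    show "winding_number (circlepath (c s) (r s)) w = 0" if "w \<notin> W" for w
    proof -
      have "dist (c s) w > r s"
        using that W sphere_subset_\<Gamma>[OF s] ball_subset_Di[OF s] by (force simp: not_less)
      then show ?thesis using r_pos[OF s] by (intro winding_number_circlepath_outside) auto
    qed
  qed auto
  then show ?thesis by (simp add: circles_integral_def)
qed

lemma circles_integral_mult_plus_parts:
  assumes f: "f \<in> \<H>" and g: "g \<in> \<H>"
  shows "circles_integral (\<lambda>x. PP f x * PP g x) = 0"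
proof -
  obtain W1 W2 where "open W1" "\<Gamma> \<subseteq> W1" "PP f holomorphic_on (W1 \<union> Di)"
    "open W2" "\<Gamma> \<subseteq> W2" "PP g holomorphic_on (W2 \<union> Di)"
    using plus_minus_part_holomorphic_extensions[OF f] plus_minus_part_holomorphic_extensions[OF g] by metis
  then show ?thesis
    by (intro circles_integral_eq_0[of "(W1 \<inter> W2) \<union> Di"] holomorphic_on_mult)
       (auto elim: holomorphic_on_subset intro: open_Di)
qed

lemma cauchy_sum_mult_var:
  assumes h: "continuous_on \<Gamma> h" and z: "z \<notin> \<Gamma>"
  shows "z * cauchy_sum c r m h z
           = cauchy_sum c r m (\<lambda>p. p * h p) z - (1 / (2 * pi * \<i>)) * circles_integral h"
proof -
  have "z * cauchy_circle (c s) (r s) h z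
          = cauchy_circle (c s) (r s) (\<lambda>p. p * h p) z - contour_integral (circlepath (c s) (r s)) h"
    if s: "s \<in> {1..m}" for s
    using cauchy_circle_mult_var[OF continuous_on_subset[OF h sphere_subset_\<Gamma>[OF s]] r_pos[OF s]]
      z sphere_subset_\<Gamma>[OF s] by blast
  then have "z * (\<Sum>s\<in>{1..m}. cauchy_circle (c s) (r s) h z)
               = (\<Sum>s\<in>{1..m}. cauchy_circle (c s) (r s) (\<lambda>p. p * h p) z) - circles_integral h"
    by (simp add: sum_distrib_left circles_integral_def sum_subtractf)
  then show ?thesis
    unfolding cauchy_sum_conv_cauchy_circle mult.left_commute[of z] by (simp add: right_diff_distrib)
qed

text \<open>Outside the disks \<open>h\<^sub>+ = 0\<close> gives \<open>(2\<pi>i)\<^sup>-\<^sup>1 circles_integral h = cauchy_sum (p h) + z h(z)\<close>,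
  and the right-hand side tends to \<open>0\<close> at infinity.\<close>
lemma circles_integral_mult_minus_parts:
  assumes f: "f \<in> \<H>" and g: "g \<in> \<H>"
  shows "circles_integral (\<lambda>x. NN f x * NN g x) = 0"
proof -
  define h where "h = (\<lambda>x. NN f x * NN g x)"
  have hc: "continuous_on \<Gamma> h"
    unfolding h_def using f g by (intro continuous_on_\<Gamma>_if_\<H> \<H>_mult \<H>_minus_part)
  have dh: "decay (Suc 1) h"
    unfolding h_def using decay_mult[OF decay_minus_part[OF f] decay_minus_part[OF g]] by simp
  have ev: "eventually (\<lambda>z. cauchy_sum c r m (\<lambda>p. p * h p) z + z * h z
                         = (1 / (2 * pi * \<i>)) * circles_integral h) at_infinity"
    using eventually_De_at_infinity
  proof eventually_elim
    case (elim z)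
    then have "cauchy_sum c r m h z = - h z"
      using plus_part_mult_minus_parts[OF f g, of z] by (simp add: h_def plus_part_De eq_neg_iff_add_eq_0)
    moreover have "z \<notin> \<Gamma>" using elim \<Gamma>_Int_De by blast
    ultimately show ?case using cauchy_sum_mult_var[OF hc, of z] by (simp add: algebra_simps)
  qed
  have "((\<lambda>z. cauchy_sum c r m (\<lambda>p. p * h p) z + z * h z) \<longlongrightarrow> 0) at_infinity"
    using hc by (intro tendsto_add_zero cauchy_sum_tendsto_0 decay_tendsto_0[OF decay_mult_var[OF dh]])
       (auto intro!: continuous_intros)
  then have "((\<lambda>z::complex. (1 / (2 * pi * \<i>)) * circles_integral h) \<longlongrightarrow> 0) at_infinity"
    using ev by (rule Lim_transform_eventually)
  then show ?thesis by (simp add: tendsto_const_iff[OF trivial_limit_at_infinity] h_def)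
qed

lemma minus_part_De_conv_circles_integral:
  assumes h: "continuous_on \<Gamma> h" and z: "z \<in> De" "z \<noteq> 0"
  shows "NN h z
           = (1 / (2 * pi * \<i>)) * circles_integral h * (1 / (z - 0)) - cauchy_sum c r m (\<lambda>p. p * h p) z / z"
proof -
  have "z \<notin> \<Gamma>" using z \<Gamma>_Int_De by blast
  then have "cauchy_sum c r m h z
               = (cauchy_sum c r m (\<lambda>p. p * h p) z - (1 / (2 * pi * \<i>)) * circles_integral h) / z"
    using cauchy_sum_mult_var[OF h] z(2) by (simp add: eq_divide_eq mult.commute)
  then show ?thesis using z(1) by (simp add: minus_part_De diff_divide_distrib)
qed

lemma contour_integral_large_circle:
  assumes W: "open W" "\<Gamma> \<subseteq> W" "De \<subseteq> W" and h: "h holomorphic_on W" and R: "R > R0"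
  shows "contour_integral (circlepath 0 R) h
           = circles_integral h - contour_integral (circlepath 0 R) (\<lambda>z. cauchy_sum c r m (\<lambda>p. p * h p) z / z)"
proof -
  have hH: "h \<in> \<H>" unfolding mem_\<H>_iff using W h by blast
  have hc: "continuous_on \<Gamma> h" using continuous_on_\<Gamma>_if_\<H>[OF hH] .
  have R0: "R > 0" using R R0_ge_1 by linarith
  have sph: "sphere 0 R \<subseteq> De" using R De_if_norm_ge_R0 by auto
  have PP_entire: "PP h holomorphic_on UNIV" by (rule holomorphic_on_UNIV_plus_part[OF W h])
  have contP: "continuous_on (sphere 0 R) (PP h)"
    using holomorphic_on_imp_continuous_on[OF PP_entire] by (rule continuous_on_subset) auto
  have "continuous_on (sphere 0 R) (\<lambda>z. h z - PP h z)"
    using continuous_on_subset[OF holomorphic_on_imp_continuous_on[OF h], of "sphere 0 R"] sph W(3) contP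
    by (intro continuous_intros) auto
  then have contN: "continuous_on (sphere 0 R) (NN h)" using minus_part_eq[OF hH] by simp
  have "continuous_on \<Gamma> (\<lambda>p. p * h p)" using hc by (intro continuous_intros)
  then have "continuous_on (sphere 0 R) (cauchy_sum c r m (\<lambda>p. p * h p))"
    using sph \<Gamma>_Int_De
      by (blast intro: continuous_on_subset holomorphic_on_imp_continuous_on holomorphic_on_cauchy_sum)
  then have contQ: "continuous_on (sphere 0 R) (\<lambda>z. cauchy_sum c r m (\<lambda>p. p * h p) z / z)"
    using R0 by (intro continuous_intros) auto
  have "contour_integral (circlepath 0 R) h = contour_integral (circlepath 0 R) (\<lambda>z. PP h z + NN h z)"
    using plus_part_add_minus_part[OF hH] by simp
  also have "\<dots> = contour_integral (circlepath 0 R) (PP h) + contour_integral (circlepath 0 R) (NN h)"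
    using contP contN R0 by (intro contour_integral_add contour_integrable_circlepath)
  also have "contour_integral (circlepath 0 R) (PP h) = 0"
    by (rule contour_integral_unique[OF Cauchy_theorem_convex_simple[OF PP_entire]]) auto
  also have "contour_integral (circlepath 0 R) (NN h)
               = contour_integral (circlepath 0 R)
                   (\<lambda>z. (1 / (2 * pi * \<i>)) * circles_integral h * (1 / (z - 0)) - cauchy_sum c r m (\<lambda>p. p * h p) z / z)"
    using sph R0 by (intro contour_integral_eq minus_part_De_conv_circles_integral[OF hc]) auto
  also have "\<dots> = contour_integral (circlepath 0 R) (\<lambda>z. (1 / (2 * pi * \<i>)) * circles_integral h * (1 / (z - 0)))
                    - contour_integral (circlepath 0 R) (\<lambda>z. cauchy_sum c r m (\<lambda>p. p * h p) z / z)"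
    using R0 by (intro contour_integral_diff contour_integrable_circlepath[OF contQ R0]
        contour_integrable_circlepath continuous_intros) auto
  also have "contour_integral (circlepath 0 R) (\<lambda>z. (1 / (2 * pi * \<i>)) * circles_integral h * (1 / (z - 0)))
               = (1 / (2 * pi * \<i>)) * circles_integral h * (2 * pi * \<i>)"
    using R0 contour_integral_circlepath_inverse[of 0 0 R]
    by (subst contour_integral_lmul) (auto intro!: contour_integrable_circlepath continuous_intros)
  finally show ?thesis by simp
qed

lemma residue_inf_conv_circles_integral:
  assumes W: "open W" "\<Gamma> \<subseteq> W" "De \<subseteq> W" and h: "h holomorphic_on W"
  shows "residue_inf h = - (1 / (2 * pi * \<i>)) * circles_integral h"
proof -
  define Q where "Q z = cauchy_sum c r m (\<lambda>p. p * h p) z / z" for z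
  have hpc: "continuous_on \<Gamma> (\<lambda>p. p * h p)"
    using holomorphic_on_imp_continuous_on[OF h] W(2)
      by (auto intro!: continuous_intros elim: continuous_on_subset)
  have far: "{z. norm z > R0} \<subseteq> De" using De_if_norm_ge_R0 by force
  have "continuous_on {z. norm z > R0} Q"
    unfolding Q_def
      using holomorphic_on_imp_continuous_on[OF holomorphic_on_cauchy_sum[OF hpc]] far \<Gamma>_Int_De R0_ge_1
    by (intro continuous_intros) (auto elim!: continuous_on_subset)
  moreover have "decay 2 Q"
    unfolding Q_def numeral_2_eq_2 using decay_cauchy_sum[OF hpc] by (intro decay_divide_var) simp
  ultimately have "((\<lambda>R. - (1 / (2 * pi * \<i>)) * (circles_integral h - contour_integral (circlepath 0 R) Q))
                    \<longlongrightarrow> - (1 / (2 * pi * \<i>)) * (circles_integral h - 0)) at_top"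
    by (intro tendsto_intros contour_integral_circlepath_decay_tendsto_0)
  moreover have "eventually (\<lambda>R. - (1 / (2 * pi * \<i>)) * (circles_integral h - contour_integral (circlepath 0 R) Q)
                                = residue_inf h) at_top"
    using eventually_gt_at_top[of R0]
  proof eventually_elim
    case (elim R)
    have "h holomorphic_on {z. norm z > R0}" by (rule holomorphic_on_subset[OF h]) (use far W(3) in blast)
    then show ?case
      using residue_inf_conv_contour_integral[of h R0 R] contour_integral_large_circle[OF W h elim] R0_ge_1 elim
      by (simp add: Q_def[abs_def])
  qed
  ultimately have "((\<lambda>R::real. residue_inf h) \<longlongrightarrow> - (1 / (2 * pi * \<i>)) * circles_integral h) at_top"
    by (simp add: Lim_transform_eventually)
  then show ?thesis by (simp add: tendsto_const_iff)
qed

end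

section \<open>The product on pairs of germs\<close>

definition pair_sum :: "(complex \<Rightarrow> complex) \<times> (complex \<Rightarrow> complex) \<Rightarrow> complex \<Rightarrow> complex" where
  "pair_sum X = (\<lambda>z. fst X z + snd X z)"

definition pair_dot :: "(complex \<Rightarrow> complex) \<Rightarrow> (complex \<Rightarrow> complex) \<Rightarrow>
    (complex \<Rightarrow> complex) \<times> (complex \<Rightarrow> complex) \<Rightarrow> complex \<Rightarrow> complex" where
  "pair_dot a ah X = (\<lambda>z. fst X z * deriv a z + snd X z * deriv ah z)"

context disks
begin

context
  fixes a ah :: "complex \<Rightarrow> complex"
  assumes \<alpha>: "deriv a \<in> \<H>" and \<beta>: "deriv ah \<in> \<H>"
begin

lemma \<H>_pair_sum: "X \<in> \<H> \<times> \<H> \<Longrightarrow> pair_sum X \<in> \<H>"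
  unfolding pair_sum_def by (intro \<H>_add) auto

lemma \<H>_pair_dot: "X \<in> \<H> \<times> \<H> \<Longrightarrow> pair_dot a ah X \<in> \<H>"
  unfolding pair_dot_def using \<alpha> \<beta> by (intro \<H>_add \<H>_mult) auto

lemma minus_part_pair_dot:
  "X \<in> \<H> \<times> \<H> \<Longrightarrow> NN (pair_dot a ah X) z = NN (\<lambda>z. fst X z * deriv a z) z + NN (\<lambda>z. snd X z * deriv ah z) z"
  unfolding pair_dot_def using \<alpha> \<beta> by (intro minus_part_add \<H>_mult) auto

lemma fst_prodH:
  assumes X: "X \<in> \<H> \<times> \<H>" and Y: "Y \<in> \<H> \<times> \<H>"
  shows "fst (prodH c r m a ah X Y)
           = (\<lambda>z. fst X z * fst Y z * deriv a z - fst Y z * NN (pair_dot a ah X) z - fst X z * NN (pair_dot a ah Y) z)"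
proof
  fix z
  have P: "PP (\<lambda>z. fst X z * deriv a z) z = fst X z * deriv a z - NN (\<lambda>z. fst X z * deriv a z) z"
    using X \<alpha> by (intro plus_part_eq \<H>_mult) auto
  have "fst (prodH c r m a ah X Y) z
          = fst Y z * PP (\<lambda>z. fst X z * deriv a z) z - fst X z * NN (\<lambda>z. fst Y z * deriv a z) z
            - fst Y z * NN (\<lambda>z. snd X z * deriv ah z) z - fst X z * NN (\<lambda>z. snd Y z * deriv ah z) z"
    by (simp add: prodH_def Let_def)
  then show "fst (prodH c r m a ah X Y) z
               = fst X z * fst Y z * deriv a z - fst Y z * NN (pair_dot a ah X) z - fst X z * NN (pair_dot a ah Y) z"
    unfolding P minus_part_pair_dot[OF X] minus_part_pair_dot[OF Y] by (simp add: algebra_simps)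
qed

lemma snd_prodH:
  assumes X: "X \<in> \<H> \<times> \<H>" and Y: "Y \<in> \<H> \<times> \<H>"
  shows "snd (prodH c r m a ah X Y)
           = (\<lambda>z. (fst X z * snd Y z + snd X z * fst Y z) * deriv a z + snd X z * snd Y z * deriv ah z
                  - snd Y z * NN (pair_dot a ah X) z - snd X z * NN (pair_dot a ah Y) z)"
proof
  fix z
  have P: "PP (\<lambda>z. fst X z * deriv a z) z = fst X z * deriv a z - NN (\<lambda>z. fst X z * deriv a z) z"
       "PP (\<lambda>z. fst Y z * deriv a z) z = fst Y z * deriv a z - NN (\<lambda>z. fst Y z * deriv a z) z"
       "PP (\<lambda>z. snd X z * deriv ah z) z = snd X z * deriv ah z - NN (\<lambda>z. snd X z * deriv ah z) z"
    using X Y \<alpha> \<beta> by (auto intro!: plus_part_eq \<H>_mult)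
  have "snd (prodH c r m a ah X Y) z
          = snd Y z * PP (\<lambda>z. snd X z * deriv ah z) z - snd X z * NN (\<lambda>z. snd Y z * deriv ah z) z
            + snd X z * PP (\<lambda>z. fst Y z * deriv a z) z + snd Y z * PP (\<lambda>z. fst X z * deriv a z) z"
    by (simp add: prodH_def Let_def)
  then show "snd (prodH c r m a ah X Y) z
               = (fst X z * snd Y z + snd X z * fst Y z) * deriv a z + snd X z * snd Y z * deriv ah z
                 - snd Y z * NN (pair_dot a ah X) z - snd X z * NN (pair_dot a ah Y) z"
    unfolding P minus_part_pair_dot[OF X] minus_part_pair_dot[OF Y] by (simp add: algebra_simps)
qed

lemma prodH_in_\<H>2:
  assumes X: "X \<in> \<H> \<times> \<H>" and Y: "Y \<in> \<H> \<times> \<H>" shows "prodH c r m a ah X Y \<in> \<H> \<times> \<H>"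
  unfolding mem_Times_iff fst_prodH[OF X Y] snd_prodH[OF X Y]
  using X Y \<alpha> \<beta> \<H>_minus_part[OF \<H>_pair_dot[OF X]] \<H>_minus_part[OF \<H>_pair_dot[OF Y]]
  by (auto intro!: \<H>_add \<H>_mult \<H>_diff)

lemma pair_dot_prodH:
  assumes X: "X \<in> \<H> \<times> \<H>" and Y: "Y \<in> \<H> \<times> \<H>"
  shows "pair_dot a ah (prodH c r m a ah X Y)
           = (\<lambda>z. PP (pair_dot a ah X) z * PP (pair_dot a ah Y) z - NN (pair_dot a ah X) z * NN (pair_dot a ah Y) z)"
  unfolding fun_eq_iff plus_part_eq[OF \<H>_pair_dot[OF X]] plus_part_eq[OF \<H>_pair_dot[OF Y]]
  by (simp add: pair_dot_def fst_prodH[OF X Y] snd_prodH[OF X Y] algebra_simps)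

lemma minus_part_pair_dot_prodH:
  assumes X: "X \<in> \<H> \<times> \<H>" and Y: "Y \<in> \<H> \<times> \<H>"
  shows "NN (pair_dot a ah (prodH c r m a ah X Y)) z = - (NN (pair_dot a ah X) z * NN (pair_dot a ah Y) z)"
proof -
  have tX: "pair_dot a ah X \<in> \<H>" and tY: "pair_dot a ah Y \<in> \<H>" using \<H>_pair_dot X Y by auto
  show ?thesis
    unfolding pair_dot_prodH[OF X Y] minus_part_diff[OF \<H>_mult[OF \<H>_plus_part[OF tX] \<H>_plus_part[OF tY]]
        \<H>_mult[OF \<H>_minus_part[OF tX] \<H>_minus_part[OF tY]]]
    using minus_part_mult_plus_parts[OF tX tY] minus_part_mult_minus_parts[OF tX tY] by simp
qed

lemma prodH_commute:
  assumes X: "X \<in> \<H> \<times> \<H>" and Y: "Y \<in> \<H> \<times> \<H>"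
  shows "prodH c r m a ah X Y = prodH c r m a ah Y X"
  by (rule prod_eqI) (simp_all add: fst_prodH snd_prodH X Y algebra_simps)

lemma prodH_assoc:
  assumes X: "X \<in> \<H> \<times> \<H>" and Y: "Y \<in> \<H> \<times> \<H>" and Z: "Z \<in> \<H> \<times> \<H>"
  shows "prodH c r m a ah (prodH c r m a ah X Y) Z = prodH c r m a ah X (prodH c r m a ah Y Z)"
proof -
  have XY: "prodH c r m a ah X Y \<in> \<H> \<times> \<H>" and YZ: "prodH c r m a ah Y Z \<in> \<H> \<times> \<H>"
    using prodH_in_\<H>2 X Y Z by auto
  show ?thesis
    by (rule prod_eqI)
       (simp_all add: fst_prodH[OF XY Z] fst_prodH[OF X YZ] snd_prodH[OF XY Z] snd_prodH[OF X YZ]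
         minus_part_pair_dot_prodH[OF X Y] minus_part_pair_dot_prodH[OF Y Z]
         fst_prodH[OF X Y] fst_prodH[OF Y Z] snd_prodH[OF X Y] snd_prodH[OF Y Z] algebra_simps)
qed

lemma pair_sum_prodH:
  assumes X: "X \<in> \<H> \<times> \<H>" and Y: "Y \<in> \<H> \<times> \<H>"
  shows "pair_sum (prodH c r m a ah X Y) z
           = deriv a z * NN (pair_sum X) z * NN (pair_sum Y) z
             - (deriv a z - deriv ah z) * (NN (pair_sum X) z - fst X z) * (NN (pair_sum Y) z - fst Y z)
             - deriv ah z * PP (pair_sum X) z * PP (pair_sum Y) z
             + PP (pair_sum X) z * PP (pair_dot a ah Y) z + PP (pair_sum Y) z * PP (pair_dot a ah X) z
             - NN (pair_sum Y) z * NN (pair_dot a ah X) z - NN (pair_sum X) z * NN (pair_dot a ah Y) z"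
  unfolding plus_part_eq[OF \<H>_pair_sum[OF X]] plus_part_eq[OF \<H>_pair_sum[OF Y]]
    plus_part_eq[OF \<H>_pair_dot[OF X]] plus_part_eq[OF \<H>_pair_dot[OF Y]]
  by (simp add: pair_sum_def pair_dot_def fst_prodH[OF X Y] snd_prodH[OF X Y] algebra_simps)

end

end

section \<open>The metric at a point of \<open>M\<close>\<close>

text \<open>The data of \<open>inM\<close>, except that of the representation \<open>a - ah = w\<^sup>d\<close> near each circle only
  its consequence \<open>(a - ah)' \<noteq> 0\<close> is kept.\<close>
locale M_point = disks +
  fixes a ah :: "complex \<Rightarrow> complex" and phi :: "nat \<Rightarrow> complex" and n :: "nat \<Rightarrow> nat"
    and U0 :: "complex set"
  assumes U0: "open U0" "\<Gamma> \<subseteq> U0"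
    and a_holo: "a holomorphic_on (U0 \<union> De)"
    and ah_holo: "ah holomorphic_on ((U0 \<union> Di) - phi ` {1..m})"
    and n0: "n 0 \<ge> 1"
    and a_growth: "\<exists>C. eventually (\<lambda>z. norm (a z - z ^ n 0) \<le> C * norm z powr (real (n 0) - 2)) at_infinity"
    and phi_in: "\<And>j. j \<in> {1..m} \<Longrightarrow> phi j \<in> ball (c j) (r j)"
    and n_pos: "\<And>j. j \<in> {1..m} \<Longrightarrow> n j \<ge> 1"
    and pole: "\<And>j. j \<in> {1..m} \<Longrightarrow> \<exists>L. L \<noteq> 0 \<and> ((\<lambda>z. (z - phi j) ^ n j * ah z) \<longlongrightarrow> L) (at (phi j))"
    and deriv_zeta_ne_0: "\<And>z. z \<in> \<Gamma> \<Longrightarrow> deriv a z - deriv ah z \<noteq> 0"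
begin

abbreviation "Pol \<equiv> phi ` {1..m}"
abbreviation "\<alpha> \<equiv> deriv a"
abbreviation "\<beta> \<equiv> deriv ah"

definition "Dreg = De \<union> (Di - Pol)"

definition "ell0 = (\<lambda>z. cauchy_sum c r m a z - cauchy_sum c r m ah z)"

definition "ell = (\<lambda>z. PP a z + NN ah z)"

lemma Pol_subset_Di: "Pol \<subseteq> Di"
  using phi_in ball_subset_Di by blast

lemma closed_Pol: "closed Pol"
  by (intro finite_imp_closed) auto

lemma open_Dreg: "open Dreg"
  unfolding Dreg_def using open_De open_Di closed_Pol by auto

lemma Dreg_Int_\<Gamma>: "Dreg \<inter> \<Gamma> = {}"
  unfolding Dreg_def using \<Gamma>_Int_De \<Gamma>_Int_Di by blast

lemma open_U0_Un_De: "open (U0 \<union> De)"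
  using U0(1) open_De by auto

lemma open_U0_Un_Di: "open ((U0 \<union> Di) - Pol)"
  using U0(1) open_Di closed_Pol by auto

lemma \<Gamma>_subset_U0_Un_Di: "\<Gamma> \<subseteq> (U0 \<union> Di) - Pol"
  using U0(2) Pol_subset_Di \<Gamma>_Int_Di by blast

lemma \<alpha>_holo: "\<alpha> holomorphic_on (U0 \<union> De)"
  using holomorphic_deriv[OF a_holo open_U0_Un_De] .

lemma \<beta>_holo: "\<beta> holomorphic_on ((U0 \<union> Di) - Pol)"
  using holomorphic_deriv[OF ah_holo open_U0_Un_Di] .

lemma a_in_\<H>: "a \<in> \<H>"
  unfolding mem_\<H>_iff using U0 a_holo by (intro exI[of _ U0]) (auto elim: holomorphic_on_subset)

lemma ah_in_\<H>: "ah \<in> \<H>"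
  unfolding mem_\<H>_iff using open_U0_Un_Di \<Gamma>_subset_U0_Un_Di ah_holo by blast

lemma \<alpha>_in_\<H>: "\<alpha> \<in> \<H>"
  unfolding mem_\<H>_iff using U0 \<alpha>_holo by (intro exI[of _ U0]) (auto elim: holomorphic_on_subset)

lemma \<beta>_in_\<H>: "\<beta> \<in> \<H>"
  unfolding mem_\<H>_iff using open_U0_Un_Di \<Gamma>_subset_U0_Un_Di \<beta>_holo by blast

lemma holomorphic_on_ell0: "ell0 holomorphic_on (- \<Gamma>)"
  unfolding ell0_def using a_in_\<H> ah_in_\<H>
  by (intro holomorphic_intros holomorphic_on_cauchy_sum continuous_on_\<Gamma>_if_\<H>)

lemma holomorphic_on_deriv_ell0: "deriv ell0 holomorphic_on (- \<Gamma>)"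
  using holomorphic_deriv[OF holomorphic_on_ell0 open_Compl_\<Gamma>] .

lemma decay_deriv_ell0: "decay 2 (deriv ell0)"
proof (rule decay_cong)
  have "decay 2 (deriv (cauchy_sum c r m h))" if "h \<in> \<H>" for h
  proof (rule decay_cong)
    show "decay 2 (\<lambda>z. (1 / (2 * pi * \<i>)) * (\<Sum>s\<in>{1..m}. contour_integral (circlepath (c s) (r s)) (\<lambda>p. h p / (p - z) ^ 2)))"
      using that by (intro decay_cmult decay_sum decay_contour_integral_cauchy_power continuous_on_\<Gamma>_if_\<H>) auto
    show "eventually (\<lambda>z. (1 / (2 * pi * \<i>)) * (\<Sum>s\<in>{1..m}. contour_integral (circlepath (c s) (r s)) (\<lambda>p. h p / (p - z) ^ 2))
            = deriv (cauchy_sum c r m h) z) at_infinity"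
      using eventually_De_at_infinity
    proof eventually_elim
      case (elim z)
      then have "z \<notin> \<Gamma>" using \<Gamma>_Int_De by blast
      then have "\<And>s. s \<in> {1..m} \<Longrightarrow> (cauchy_circle (c s) (r s) h has_field_derivative
                   contour_integral (circlepath (c s) (r s)) (\<lambda>p. h p / (p - z) ^ 2)) (at z)"
        using sphere_subset_\<Gamma> continuous_on_subset[OF continuous_on_\<Gamma>_if_\<H>[OF that]] r_pos
        by (intro has_field_derivative_cauchy_circle) blast+
      then show ?case unfolding cauchy_sum_conv_cauchy_circle[abs_def]
        by (intro DERIV_imp_deriv[symmetric] DERIV_cmult DERIV_sum) auto
    qed
  qed
  then show "decay 2 (\<lambda>z. deriv (cauchy_sum c r m a) z + - deriv (cauchy_sum c r m ah) z)"
    using a_in_\<H> ah_in_\<H> by (intro decay_add decay_uminus)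
  show "eventually (\<lambda>z. deriv (cauchy_sum c r m a) z + - deriv (cauchy_sum c r m ah) z = deriv ell0 z) at_infinity"
    using eventually_De_at_infinity
  proof eventually_elim
    case (elim z)
    then have "z \<in> - \<Gamma>" using \<Gamma>_Int_De by blast
    then have "cauchy_sum c r m a field_differentiable at z" "cauchy_sum c r m ah field_differentiable at z"
      using holomorphic_on_cauchy_sum[OF continuous_on_\<Gamma>_if_\<H>] a_in_\<H> ah_in_\<H> open_Compl_\<Gamma>
      by (blast intro: holomorphic_on_imp_differentiable_at)+
    then show ?case unfolding ell0_def by simp
  qed
qed

lemma ell_De: "z \<in> De \<Longrightarrow> ell z = a z + ell0 z"
  by (simp add: ell_def ell0_def plus_part_De minus_part_De)

lemma ell_Di: "z \<in> Di \<Longrightarrow> ell z = ah z + ell0 z"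
  by (simp add: ell_def ell0_def plus_part_Di minus_part_Di)

lemma deriv_ell_De:
  assumes z: "z \<in> De" shows "deriv ell z = \<alpha> z + deriv ell0 z"
proof -
  have "deriv ell z = deriv (\<lambda>w. a w + ell0 w) z"
    by (rule deriv_cong_ev) (use z open_De in \<open>auto simp: eventually_nhds ell_De intro!: exI[of _ De]\<close>)
  also have "\<dots> = \<alpha> z + deriv ell0 z"
  proof (rule deriv_add)
    show "a field_differentiable at z"
      using a_holo open_U0_Un_De z holomorphic_on_imp_differentiable_at by blast
    show "ell0 field_differentiable at z"
      using holomorphic_on_ell0 open_Compl_\<Gamma> z \<Gamma>_Int_De holomorphic_on_imp_differentiable_at by blast
  qed
  finally show ?thesis .
qed

lemma deriv_ell_Di:
  assumes z: "z \<in> Di - Pol" shows "deriv ell z = \<beta> z + deriv ell0 z"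
proof -
  have op: "open (Di - Pol)" using open_Di closed_Pol by auto
  have "deriv ell z = deriv (\<lambda>w. ah w + ell0 w) z"
    by (rule deriv_cong_ev) (use z op in \<open>auto simp: eventually_nhds ell_Di intro!: exI[of _ "Di - Pol"]\<close>)
  also have "\<dots> = \<beta> z + deriv ell0 z"
  proof (rule deriv_add)
    show "ah field_differentiable at z"
      using ah_holo open_U0_Un_Di z holomorphic_on_imp_differentiable_at by blast
    show "ell0 field_differentiable at z"
      using holomorphic_on_ell0 open_Compl_\<Gamma> z \<Gamma>_Int_Di holomorphic_on_imp_differentiable_at by blast
  qed
  finally show ?thesis .
qed

lemma holomorphic_on_deriv_ell: "deriv ell holomorphic_on Dreg"
proof -
  have "ell holomorphic_on De"
    by (rule holomorphic_transform[of "\<lambda>z. a z + ell0 z"])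
       (use a_holo holomorphic_on_ell0 \<Gamma>_Int_De in \<open>auto intro!: holomorphic_intros elim: holomorphic_on_subset simp: ell_De\<close>)
  moreover have "ell holomorphic_on (Di - Pol)"
    by (rule holomorphic_transform[of "\<lambda>z. ah z + ell0 z"])
       (use ah_holo holomorphic_on_ell0 \<Gamma>_Int_Di in \<open>auto intro!: holomorphic_intros elim: holomorphic_on_subset simp: ell_Di\<close>)
  ultimately have "ell holomorphic_on Dreg"
    unfolding Dreg_def using open_De open_Di closed_Pol by (intro holomorphic_on_Un) auto
  then show ?thesis using holomorphic_deriv[OF _ open_Dreg] by blast
qed

lemma fst_eta: "fst (eta c r m a ah X) = (\<lambda>z. \<alpha> z * NN (pair_sum X) z - NN (pair_dot a ah X) z)"
  by (simp add: eta_def Let_def pair_sum_def pair_dot_def)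

lemma snd_eta: "snd (eta c r m a ah X) = (\<lambda>z. - \<beta> z * PP (pair_sum X) z + PP (pair_dot a ah X) z)"
  by (simp add: eta_def Let_def pair_sum_def pair_dot_def)

lemma eta_in_\<H>2:
  assumes "X \<in> \<H> \<times> \<H>" shows "eta c r m a ah X \<in> \<H> \<times> \<H>"
proof -
  have "pair_sum X \<in> \<H>" "pair_dot a ah X \<in> \<H>"
    using \<H>_pair_sum[OF \<alpha>_in_\<H> \<beta>_in_\<H> assms] \<H>_pair_dot[OF \<alpha>_in_\<H> \<beta>_in_\<H> assms] .
  then show ?thesis unfolding mem_Times_iff fst_eta snd_eta using \<alpha>_in_\<H> \<beta>_in_\<H>
    by (auto intro!: \<H>_add \<H>_mult \<H>_diff \<H>_uminus \<H>_minus_part \<H>_plus_part)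
qed

text \<open>\<open>dell X\<close> is the variation \<open>\<partial>\<^sub>X \<ell>\<close> of \<open>\<ell>\<close> along the tangent vector \<open>\<eta>(X)\<close>.\<close>
definition "dell X = (\<lambda>z. PP (fst (eta c r m a ah X)) z + NN (snd (eta c r m a ah X)) z)"

definition "cs X = cauchy_sum c r m (pair_sum X)"

definition "rem X = (\<lambda>z. cauchy_sum c r m (\<lambda>z. fst (eta c r m a ah X) z - snd (eta c r m a ah X) z) z
    + cauchy_sum c r m (pair_dot a ah X) z + deriv ell0 z * cs X z)"

lemma continuous_on_\<Gamma>_eta:
  assumes "X \<in> \<H> \<times> \<H>"
  shows "continuous_on \<Gamma> (fst (eta c r m a ah X))" "continuous_on \<Gamma> (snd (eta c r m a ah X))"
  using eta_in_\<H>2[OF assms] continuous_on_\<Gamma>_if_\<H> by auto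

lemma dell_eq:
  assumes X: "X \<in> \<H> \<times> \<H>" and z: "z \<in> Dreg"
  shows "dell X z = rem X z - deriv ell z * cs X z"
proof -
  have zS: "z \<notin> \<Gamma>" using z Dreg_Int_\<Gamma> by blast
  have lin: "cauchy_sum c r m (\<lambda>x. fst (eta c r m a ah X) x - snd (eta c r m a ah X) x) z
               = cauchy_sum c r m (fst (eta c r m a ah X)) z - cauchy_sum c r m (snd (eta c r m a ah X)) z"
    using cauchy_sum_lincomb[OF continuous_on_\<Gamma>_eta[OF X] zS, of 1 "-1"] by simp
  consider "z \<in> De" | "z \<in> Di - Pol" using z unfolding Dreg_def by blast
  then show ?thesis
  proof cases
    case 1
    then show ?thesis
      unfolding rem_def lin deriv_ell_De[OF 1]
      by (simp add: dell_def plus_part_De minus_part_De fst_eta cs_def algebra_simps)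
  next
    case 2
    then have "z \<in> Di" by blast
    then show ?thesis
      unfolding rem_def lin deriv_ell_Di[OF 2]
      by (simp add: dell_def plus_part_Di minus_part_Di snd_eta cs_def algebra_simps)
  qed
qed

lemma holomorphic_on_cs: "X \<in> \<H> \<times> \<H> \<Longrightarrow> cs X holomorphic_on (- \<Gamma>)"
  unfolding cs_def
  by (intro holomorphic_on_cauchy_sum continuous_on_\<Gamma>_if_\<H> \<H>_pair_sum[OF \<alpha>_in_\<H> \<beta>_in_\<H>])

lemma decay_cs: "X \<in> \<H> \<times> \<H> \<Longrightarrow> decay 1 (cs X)"
  unfolding cs_def
  by (intro decay_cauchy_sum continuous_on_\<Gamma>_if_\<H> \<H>_pair_sum[OF \<alpha>_in_\<H> \<beta>_in_\<H>])

lemma holomorphic_on_rem: assumes X: "X \<in> \<H> \<times> \<H>" shows "rem X holomorphic_on (- \<Gamma>)"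
  unfolding rem_def using continuous_on_\<Gamma>_eta[OF X] holomorphic_on_deriv_ell0 holomorphic_on_cs[OF X]
    continuous_on_\<Gamma>_if_\<H>[OF \<H>_pair_dot[OF \<alpha>_in_\<H> \<beta>_in_\<H> X]]
  by (intro holomorphic_on_add holomorphic_on_mult holomorphic_on_cauchy_sum continuous_intros) auto

lemma holomorphic_on_dell: assumes X: "X \<in> \<H> \<times> \<H>" shows "dell X holomorphic_on Dreg"
proof -
  have "rem X holomorphic_on Dreg" "cs X holomorphic_on Dreg"
    using holomorphic_on_rem[OF X] holomorphic_on_cs[OF X] Dreg_Int_\<Gamma> by (auto elim!: holomorphic_on_subset)
  then have "(\<lambda>z. rem X z - deriv ell z * cs X z) holomorphic_on Dreg"
    using holomorphic_on_deriv_ell by (intro holomorphic_on_diff holomorphic_on_mult)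
  then show ?thesis by (rule holomorphic_transform) (simp add: dell_eq[OF X])
qed

definition "metric_integrand X Y = (\<lambda>z. dell X z * dell Y z / deriv ell z)"

definition "integrand_rem X Y = (\<lambda>z. deriv ell0 z * cs X z * cs Y z - cs X z * rem Y z - cs Y z * rem X z
    + rem X z * rem Y z / deriv ell z)"

text \<open>Only the first term has residues: the remainder is bounded at the poles and
  \<open>O(|z|\<^sup>-\<^sup>2)\<close> at infinity.\<close>
lemma metric_integrand_decomp:
  assumes X: "X \<in> \<H> \<times> \<H>" and Y: "Y \<in> \<H> \<times> \<H>" and z: "z \<in> Dreg" and nz: "deriv ell z \<noteq> 0"
  shows "metric_integrand X Y z = (deriv ell z - deriv ell0 z) * cs X z * cs Y z + integrand_rem X Y z"
  unfolding metric_integrand_def integrand_rem_def dell_eq[OF X z] dell_eq[OF Y z] using nz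
  by (simp add: field_simps)

lemma far_region:
  obtains R1 where "R1 \<ge> 1"
    "\<And>z. norm z > R1 \<Longrightarrow> z \<in> De \<and> deriv ell z \<noteq> 0 \<and> norm (1 / deriv ell z) \<le> 4 \<and> norm (deriv ell0 z) \<le> 1 / 4"
proof -
  obtain C where "eventually (\<lambda>z. norm (a z - z ^ n 0) \<le> C * norm z powr (real (n 0) - 2)) at_infinity"
    using a_growth by blast
  moreover have "a holomorphic_on {z. norm z > R0}"
    using a_holo De_if_norm_ge_R0 by (auto elim!: holomorphic_on_subset)
  ultimately have \<alpha>_large: "eventually (\<lambda>z. norm (\<alpha> z) \<ge> 1 / 2) at_infinity"
    using deriv_lower_bound_at_infinity n0 by blast
  have "((\<lambda>z. norm (deriv ell0 z)) \<longlongrightarrow> 0) at_infinity"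
    using tendsto_norm[OF decay_tendsto_0[OF decay_deriv_ell0]] by simp
  then have ell0_small: "eventually (\<lambda>z. norm (deriv ell0 z) < 1 / 4) at_infinity"
    by (rule order_tendstoD) simp
  have "eventually (\<lambda>z. z \<in> De \<and> deriv ell z \<noteq> 0 \<and> norm (1 / deriv ell z) \<le> 4 \<and> norm (deriv ell0 z) \<le> 1 / 4)
          at_infinity"
    using \<alpha>_large ell0_small eventually_De_at_infinity
  proof eventually_elim
    case (elim z)
    have "norm (deriv ell z) \<ge> norm (\<alpha> z) - norm (deriv ell0 z)"
      unfolding deriv_ell_De[OF elim(3)] using norm_diff_ineq[of "\<alpha> z" "deriv ell0 z"] by simp
    then have "norm (deriv ell z) \<ge> 1 / 4" using elim by linarith
    then show ?case using elim by (auto simp: norm_divide divide_le_eq)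
  qed
  then obtain B where "\<And>z. norm z \<ge> B \<Longrightarrow>
      z \<in> De \<and> deriv ell z \<noteq> 0 \<and> norm (1 / deriv ell z) \<le> 4 \<and> norm (deriv ell0 z) \<le> 1 / 4"
    by (auto simp: eventually_at_infinity)
  then show ?thesis by (intro that[of "max B 1"]) auto
qed

lemma decay_rem:
  assumes X: "X \<in> \<H> \<times> \<H>" shows "decay 1 (rem X)"
proof -
  obtain R1 where R1: "\<And>z. norm z > R1 \<Longrightarrow> norm (deriv ell0 z) \<le> 1 / 4" using far_region by metis
  have "eventually (\<lambda>z. norm (deriv ell0 z) \<le> 1 / 4) at_infinity"
    using eventually_norm_gt_at_infinity[of R1] by eventually_elim (rule R1)
  moreover have "continuous_on \<Gamma> (\<lambda>z. fst (eta c r m a ah X) z - snd (eta c r m a ah X) z)"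
    using continuous_on_\<Gamma>_eta[OF X] by (intro continuous_intros)
  moreover have "continuous_on \<Gamma> (pair_dot a ah X)" "continuous_on \<Gamma> (pair_sum X)"
    using \<H>_pair_dot[OF \<alpha>_in_\<H> \<beta>_in_\<H> X] \<H>_pair_sum[OF \<alpha>_in_\<H> \<beta>_in_\<H> X]
    by (auto intro: continuous_on_\<Gamma>_if_\<H>)
  ultimately show ?thesis
    unfolding rem_def cs_def by (intro decay_add decay_cauchy_sum decay_mult_bounded)
qed

lemma decay_integrand_rem:
  assumes X: "X \<in> \<H> \<times> \<H>" and Y: "Y \<in> \<H> \<times> \<H>" shows "decay 2 (integrand_rem X Y)"
proof -
  obtain R1 where R1: "\<And>z. norm z > R1 \<Longrightarrow> norm (1 / deriv ell z) \<le> 4 \<and> norm (deriv ell0 z) \<le> 1 / 4"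
    using far_region by metis
  have bounds: "eventually (\<lambda>z. norm (deriv ell0 z) \<le> 1 / 4) at_infinity"
    "eventually (\<lambda>z. norm (1 / deriv ell z) \<le> 4) at_infinity"
    using eventually_norm_gt_at_infinity[of R1] R1 by (auto elim!: eventually_mono)
  have cs: "decay 1 (cs X)" "decay 1 (cs Y)" using decay_cs X Y by auto
  have "decay (1 + 1) (\<lambda>z. deriv ell0 z * (cs X z * cs Y z) + - (cs X z * rem Y z) + - (cs Y z * rem X z)
                      + 1 / deriv ell z * (rem X z * rem Y z))"
    using cs decay_rem[OF X] decay_rem[OF Y] bounds
    by (intro decay_add decay_uminus decay_mult decay_mult_bounded[of "1 + 1"])
  from this[unfolded one_add_one] show ?thesis
    unfolding integrand_rem_def by (rule decay_cong) (simp add: algebra_simps)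
qed

lemma residue_inf_metric_integrand_principal:
  assumes X: "X \<in> \<H> \<times> \<H>" and Y: "Y \<in> \<H> \<times> \<H>"
  shows "residue_inf (metric_integrand X Y) = residue_inf (\<lambda>z. \<alpha> z * cs X z * cs Y z)"
proof -
  obtain R1 where R1: "R1 \<ge> 1"
    and far: "\<And>z. norm z > R1 \<Longrightarrow> z \<in> De \<and> deriv ell z \<noteq> 0"
    using far_region by metis
  define E where "E = {z::complex. norm z > R1}"
  have E: "E \<subseteq> De" "E \<subseteq> Dreg" "E \<subseteq> - \<Gamma>" using far \<Gamma>_Int_De by (auto simp: E_def Dreg_def)
  define H1 where "H1 = (\<lambda>z. \<alpha> z * cs X z * cs Y z)"
  have F_holo: "metric_integrand X Y holomorphic_on E"
    unfolding metric_integrand_def using holomorphic_on_dell[OF X] holomorphic_on_dell[OF Y]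
      holomorphic_on_deriv_ell E far
    by (intro holomorphic_on_divide holomorphic_on_mult) (auto simp: E_def elim: holomorphic_on_subset)
  have H1_holo: "H1 holomorphic_on E"
    unfolding H1_def using \<alpha>_holo holomorphic_on_cs[OF X] holomorphic_on_cs[OF Y] E
    by (intro holomorphic_on_mult) (auto elim: holomorphic_on_subset)
  have "residue_inf (\<lambda>z. metric_integrand X Y z - H1 z) = 0"
  proof (rule residue_inf_eq_0_if_decay)
    show "(\<lambda>z. metric_integrand X Y z - H1 z) holomorphic_on {z. norm z > R1}"
      using F_holo H1_holo by (auto simp: E_def intro: holomorphic_intros)
    show "decay 2 (\<lambda>z. metric_integrand X Y z - H1 z)"
    proof (rule decay_cong[OF decay_integrand_rem[OF X Y]])
      show "eventually (\<lambda>z. integrand_rem X Y z = metric_integrand X Y z - H1 z) at_infinity"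
        using eventually_norm_gt_at_infinity[of R1]
      proof eventually_elim
        case (elim z)
        then have z: "z \<in> De" "z \<in> Dreg" "deriv ell z \<noteq> 0" using far E by (auto simp: E_def)
        show ?case using metric_integrand_decomp[OF X Y z(2,3)] deriv_ell_De[OF z(1)] by (simp add: H1_def)
      qed
    qed
  qed (use R1 in auto)
  then show ?thesis
    using residue_inf_add[of "\<lambda>z. metric_integrand X Y z - H1 z" R1 H1] F_holo H1_holo R1
    by (simp add: E_def H1_def holomorphic_on_diff)
qed

lemma residue_inf_metric_integrand:
  assumes X: "X \<in> \<H> \<times> \<H>" and Y: "Y \<in> \<H> \<times> \<H>"
  shows "residue_inf (metric_integrand X Y)
           = - (1 / (2 * pi * \<i>)) * circles_integral (\<lambda>z. \<alpha> z * NN (pair_sum X) z * NN (pair_sum Y) z)"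
proof -
  have far: "{z. norm z > R0} \<subseteq> De" using De_if_norm_ge_R0 by force
  obtain W1 W2 where W: "open W1" "\<Gamma> \<subseteq> W1" "NN (pair_sum X) holomorphic_on (W1 \<union> De)"
    "open W2" "\<Gamma> \<subseteq> W2" "NN (pair_sum Y) holomorphic_on (W2 \<union> De)"
    using plus_minus_part_holomorphic_extensions[OF \<H>_pair_sum[OF \<alpha>_in_\<H> \<beta>_in_\<H> X]]
      plus_minus_part_holomorphic_extensions[OF \<H>_pair_sum[OF \<alpha>_in_\<H> \<beta>_in_\<H> Y]] by metis
  have H2_holo: "(\<lambda>z. \<alpha> z * NN (pair_sum X) z * NN (pair_sum Y) z) holomorphic_on ((U0 \<inter> W1 \<inter> W2) \<union> De)"
    using \<alpha>_holo W by (intro holomorphic_on_mult) (auto elim!: holomorphic_on_subset)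
  have "residue_inf (\<lambda>z. \<alpha> z * cs X z * cs Y z) = residue_inf (\<lambda>z. \<alpha> z * NN (pair_sum X) z * NN (pair_sum Y) z)"
  proof (rule residue_inf_cong[of _ R0])
    show "(\<lambda>z. \<alpha> z * cs X z * cs Y z) holomorphic_on {z. norm z > R0}"
      using \<alpha>_holo holomorphic_on_cs[OF X] holomorphic_on_cs[OF Y] far \<Gamma>_Int_De
      by (intro holomorphic_on_mult) (auto elim!: holomorphic_on_subset)
    show "(\<lambda>z. \<alpha> z * NN (pair_sum X) z * NN (pair_sum Y) z) holomorphic_on {z. norm z > R0}"
      using H2_holo far by (auto elim!: holomorphic_on_subset)
  qed (use far R0_ge_1 in \<open>auto simp: cs_def minus_part_De\<close>)
  also have "\<dots> = - (1 / (2 * pi * \<i>)) * circles_integral (\<lambda>z. \<alpha> z * NN (pair_sum X) z * NN (pair_sum Y) z)"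
    by (rule residue_inf_conv_circles_integral[OF _ _ _ H2_holo]) (use U0 W open_De in auto)
  finally show ?thesis by (simp add: residue_inf_metric_integrand_principal[OF X Y])
qed

lemma phi_notin_other_ball:
  assumes "j \<in> {1..m}" "k \<in> {1..m}" "k \<noteq> j" shows "phi k \<notin> ball (c j) (r j)"
proof
  assume "phi k \<in> ball (c j) (r j)"
  then have "phi k \<in> cball (c k) (r k) \<inter> cball (c j) (r j)" using phi_in[OF assms(2)] by auto
  then show False using disjoint[OF assms(2,1,3)] by blast
qed

lemma punctured_ball_at_pole:
  assumes j: "j \<in> {1..m}"
  obtains e where "e > 0" "ball (phi j) e \<subseteq> Di" "ball (phi j) e - {phi j} \<subseteq> Di - Pol"
proof -
  obtain e where e: "e > 0" "ball (phi j) e \<subseteq> ball (c j) (r j)"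
    using phi_in[OF j] open_ball openE by metis
  have "z \<notin> Pol" if "z \<in> ball (phi j) e - {phi j}" for z
    using that e phi_notin_other_ball[OF j] by (force simp: subset_iff)
  then show ?thesis using that[OF e(1)] e ball_subset_Di[OF j] by blast
qed

text \<open>\<open>\<ell>' = \<beta> + \<ell>\<^sub>0'\<close> near \<open>phi j\<close>, and \<open>\<beta>\<close> has a pole of exact order \<open>n j + 1\<close> there.\<close>
lemma deriv_ell_pole:
  assumes j: "j \<in> {1..m}"
  obtains L where "L \<noteq> 0" "((\<lambda>z. (z - phi j) ^ Suc (n j) * deriv ell z) \<longlongrightarrow> L) (at (phi j))"
proof -
  define \<phi> where "\<phi> = phi j"
  obtain e0 where e0: "e0 > 0" "ball \<phi> e0 \<subseteq> Di" "ball \<phi> e0 - {\<phi>} \<subseteq> Di - Pol"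
    using punctured_ball_at_pole[OF j] unfolding \<phi>_def by metis
  obtain L where L: "L \<noteq> 0" "((\<lambda>z. (z - \<phi>) ^ n j * ah z) \<longlongrightarrow> L) (at \<phi>)"
    using pole[OF j] by (auto simp: \<phi>_def)
  have "ah holomorphic_on (ball \<phi> e0 - {\<phi>})" using ah_holo e0(3) by (auto elim!: holomorphic_on_subset)
  then have lim\<beta>: "((\<lambda>z. (z - \<phi>) ^ Suc (n j) * \<beta> z) \<longlongrightarrow> - (of_nat (n j) * L)) (at \<phi>)"
    by (rule power_mult_deriv_tendsto[OF e0(1) _ L(2)])
  have "\<phi> \<in> - \<Gamma>" using e0(1,2) \<Gamma>_Int_Di centre_in_ball[of \<phi> e0] by blast
  then have "isCont (deriv ell0) \<phi>"
    using holomorphic_on_imp_continuous_on[OF holomorphic_on_deriv_ell0] open_Compl_\<Gamma>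
    by (simp add: continuous_on_eq_continuous_at)
  then have "((\<lambda>z. (z - \<phi>) ^ Suc (n j) * deriv ell0 z) \<longlongrightarrow> (\<phi> - \<phi>) ^ Suc (n j) * deriv ell0 \<phi>) (at \<phi>)"
    by (intro tendsto_intros) (auto simp: isCont_def)
  then have "((\<lambda>z. (z - \<phi>) ^ Suc (n j) * deriv ell0 z) \<longlongrightarrow> 0) (at \<phi>)" by simp
  from tendsto_add[OF lim\<beta> this]
  have "((\<lambda>z. (z - \<phi>) ^ Suc (n j) * (\<beta> z + deriv ell0 z)) \<longlongrightarrow> - (of_nat (n j) * L)) (at \<phi>)"
    by (simp add: distrib_left)
  moreover have "eventually (\<lambda>z. (z - \<phi>) ^ Suc (n j) * (\<beta> z + deriv ell0 z) = (z - \<phi>) ^ Suc (n j) * deriv ell z) (at \<phi>)"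
    unfolding eventually_at
  proof (intro exI[of _ e0] conjI ballI impI)
    show "e0 > 0" by (rule e0(1))
    fix z assume "z \<noteq> \<phi> \<and> dist z \<phi> < e0"
    then have "z \<in> Di - Pol" using e0(3) by (auto simp: dist_commute)
    then show "(z - \<phi>) ^ Suc (n j) * (\<beta> z + deriv ell0 z) = (z - \<phi>) ^ Suc (n j) * deriv ell z"
      by (simp add: deriv_ell_Di)
  qed
  ultimately have "((\<lambda>z. (z - \<phi>) ^ Suc (n j) * deriv ell z) \<longlongrightarrow> - (of_nat (n j) * L)) (at \<phi>)"
    by (rule Lim_transform_eventually)
  moreover have "- (of_nat (n j) * L) \<noteq> 0" using L(1) n_pos[OF j] by simp
  ultimately show ?thesis using that unfolding \<phi>_def by blast
qed

lemma inverse_deriv_ell_bounded_at_pole: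
  assumes j: "j \<in> {1..m}"
  obtains e q where "e > 0" "q > 0" "ball (phi j) e \<subseteq> Di" "ball (phi j) e - {phi j} \<subseteq> Di - Pol"
    "\<And>z. z \<in> ball (phi j) e - {phi j} \<Longrightarrow> deriv ell z \<noteq> 0 \<and> norm (1 / deriv ell z) \<le> 1 / q"
proof -
  define \<phi> where "\<phi> = phi j"
  obtain e0 where e0: "e0 > 0" "ball \<phi> e0 \<subseteq> Di" "ball \<phi> e0 - {\<phi>} \<subseteq> Di - Pol"
    using punctured_ball_at_pole[OF j] unfolding \<phi>_def by metis
  obtain L where L: "L \<noteq> 0" "((\<lambda>z. (z - \<phi>) ^ Suc (n j) * deriv ell z) \<longlongrightarrow> L) (at \<phi>)"
    using deriv_ell_pole[OF j] unfolding \<phi>_def by metis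
  define q where "q = norm L / 2"
  have q: "q > 0" using L(1) by (simp add: q_def)
  have "eventually (\<lambda>z. norm ((z - \<phi>) ^ Suc (n j) * deriv ell z) > q) (at \<phi>)"
    using tendsto_norm[OF L(2)] by (rule order_tendstoD) (use q in \<open>simp add: q_def\<close>)
  then obtain d where d: "d > 0" "\<And>z. z \<noteq> \<phi> \<Longrightarrow> dist z \<phi> < d \<Longrightarrow> norm ((z - \<phi>) ^ Suc (n j) * deriv ell z) > q"
    by (auto simp: eventually_at)
  define e where "e = min d (min e0 1)"
  show ?thesis
  proof (rule that[of e q, folded \<phi>_def])
    show "e > 0" using d e0 by (simp add: e_def)
    show "ball \<phi> e - {\<phi>} \<subseteq> Di - Pol" "ball \<phi> e \<subseteq> Di" using e0 by (auto simp: e_def)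
    fix z assume z: "z \<in> ball \<phi> e - {\<phi>}"
    have big: "norm ((z - \<phi>) ^ Suc (n j) * deriv ell z) > q"
      using d(2)[of z] z by (auto simp: e_def dist_commute)
    have "norm (z - \<phi>) \<le> 1" using z by (auto simp: e_def dist_norm norm_minus_commute)
    then have "norm ((z - \<phi>) ^ Suc (n j)) \<le> 1"
      unfolding norm_power by (intro power_le_one) auto
    moreover have "norm (1 / deriv ell z)
                     = norm ((z - \<phi>) ^ Suc (n j)) / norm ((z - \<phi>) ^ Suc (n j) * deriv ell z)"
      using z by (simp add: norm_mult norm_divide)
    ultimately have "norm (1 / deriv ell z) \<le> 1 / q"
      using big q by (auto intro: frac_le)
    then show "deriv ell z \<noteq> 0 \<and> norm (1 / deriv ell z) \<le> 1 / q" using big by auto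
  qed (rule q)
qed

lemma norm_integrand_rem_le:
  assumes "norm (deriv ell0 z) \<le> M" "norm (cs X z) \<le> M" "norm (cs Y z) \<le> M"
    "norm (rem X z) \<le> M" "norm (rem Y z) \<le> M" "norm (1 / deriv ell z) \<le> B"
  shows "norm (integrand_rem X Y z) \<le> M * M * M + M * M + M * M + M * M * B"
proof -
  have M: "M \<ge> 0" using assms(1) norm_ge_zero order_trans by blast
  have "norm (integrand_rem X Y z) \<le> norm (deriv ell0 z * cs X z * cs Y z) + norm (cs X z * rem Y z)
          + norm (cs Y z * rem X z) + norm (rem X z * rem Y z * (1 / deriv ell z))"
    unfolding integrand_rem_def
    by (intro order_trans[OF norm_triangle_ineq] add_mono order_trans[OF norm_triangle_ineq4] order_refl)
       simp
  also have "\<dots> \<le> M * M * M + M * M + M * M + M * M * B"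
    unfolding norm_mult using assms M by (intro add_mono mult_mono) auto
  finally show ?thesis .
qed

lemma integrand_rem_bounded_at_pole:
  assumes X: "X \<in> \<H> \<times> \<H>" and Y: "Y \<in> \<H> \<times> \<H>" and j: "j \<in> {1..m}"
  obtains e B where "e > 0" "ball (phi j) e - {phi j} \<subseteq> Di - Pol"
    "\<And>z. z \<in> ball (phi j) e - {phi j} \<Longrightarrow> deriv ell z \<noteq> 0 \<and> norm (integrand_rem X Y z) \<le> B"
proof -
  obtain e q where e: "e > 0" "ball (phi j) e \<subseteq> Di" "ball (phi j) e - {phi j} \<subseteq> Di - Pol"
    and q: "\<And>z. z \<in> ball (phi j) e - {phi j} \<Longrightarrow> deriv ell z \<noteq> 0 \<and> norm (1 / deriv ell z) \<le> 1 / q"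
    using inverse_deriv_ell_bounded_at_pole[OF j] by metis
  have K: "cball (phi j) (e / 2) \<subseteq> - \<Gamma>" using e(1,2) \<Gamma>_Int_Di by (force simp: subset_iff)
  have "\<exists>M. \<forall>z\<in>cball (phi j) (e / 2). norm (f z) \<le> M" if "f holomorphic_on (- \<Gamma>)" for f
    using continuous_on_compact_bound[OF compact_cball continuous_on_subset[OF holomorphic_on_imp_continuous_on[OF that] K]]
    by metis
  then obtain M1 M2 M3 M4 M5 where "\<forall>z\<in>cball (phi j) (e / 2). norm (deriv ell0 z) \<le> M1"
    "\<forall>z\<in>cball (phi j) (e / 2). norm (cs X z) \<le> M2" "\<forall>z\<in>cball (phi j) (e / 2). norm (cs Y z) \<le> M3"
    "\<forall>z\<in>cball (phi j) (e / 2). norm (rem X z) \<le> M4" "\<forall>z\<in>cball (phi j) (e / 2). norm (rem Y z) \<le> M5"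
    using holomorphic_on_deriv_ell0 holomorphic_on_cs[OF X] holomorphic_on_cs[OF Y]
      holomorphic_on_rem[OF X] holomorphic_on_rem[OF Y] by metis
  then have bound: "\<forall>z\<in>cball (phi j) (e / 2). norm (deriv ell0 z) \<le> M \<and> norm (cs X z) \<le> M \<and> norm (cs Y z) \<le> M
                      \<and> norm (rem X z) \<le> M \<and> norm (rem Y z) \<le> M"
    if "M = M1 + M2 + M3 + M4 + M5" for M
    using that by (smt (verit, best) norm_ge_zero)
  show ?thesis
  proof (rule that[of "e / 2"])
    show "e / 2 > 0" using e by auto
    have "ball (phi j) (e / 2) \<subseteq> ball (phi j) e" using e(1) by (intro subset_ball) simp
    then show "ball (phi j) (e / 2) - {phi j} \<subseteq> Di - Pol" using e(3) by blast
    fix z assume z: "z \<in> ball (phi j) (e / 2) - {phi j}"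
    then have "z \<in> ball (phi j) e - {phi j}" using e(1) by auto
    then show "deriv ell z \<noteq> 0 \<and> norm (integrand_rem X Y z)
                 \<le> (M1 + M2 + M3 + M4 + M5) ^ 3 + 2 * (M1 + M2 + M3 + M4 + M5) ^ 2
                   + (M1 + M2 + M3 + M4 + M5) ^ 2 * (1 / q)"
      using q norm_integrand_rem_le[of z "M1 + M2 + M3 + M4 + M5" X Y "1 / q"] bound z
      by (simp add: power3_eq_cube power2_eq_square)
  qed
qed

lemma residue_metric_integrand_principal_pole:
  assumes X: "X \<in> \<H> \<times> \<H>" and Y: "Y \<in> \<H> \<times> \<H>" and j: "j \<in> {1..m}"
  shows "residue (metric_integrand X Y) (phi j) = residue (\<lambda>z. \<beta> z * cs X z * cs Y z) (phi j)"
proof -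
  obtain e B where e: "e > 0" and P: "ball (phi j) e - {phi j} \<subseteq> Di - Pol"
    and bound: "\<And>z. z \<in> ball (phi j) e - {phi j} \<Longrightarrow> deriv ell z \<noteq> 0 \<and> norm (integrand_rem X Y z) \<le> B"
    using integrand_rem_bounded_at_pole[OF X Y j] by metis
  define H2 where "H2 = (\<lambda>z. \<beta> z * cs X z * cs Y z)"
  have Dreg: "ball (phi j) e - {phi j} \<subseteq> Dreg" and nG: "ball (phi j) e - {phi j} \<subseteq> - \<Gamma>"
    using P \<Gamma>_Int_Di by (auto simp: Dreg_def)
  have H2: "H2 holomorphic_on (ball (phi j) e - {phi j})"
    unfolding H2_def using \<beta>_holo holomorphic_on_cs[OF X] holomorphic_on_cs[OF Y] P nG
    by (intro holomorphic_on_mult) (auto elim!: holomorphic_on_subset)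
  have F: "metric_integrand X Y holomorphic_on (ball (phi j) e - {phi j})"
    unfolding metric_integrand_def
    using holomorphic_on_subset[OF holomorphic_on_dell[OF X] Dreg] holomorphic_on_subset[OF holomorphic_on_dell[OF Y] Dreg]
      holomorphic_on_subset[OF holomorphic_on_deriv_ell Dreg] bound
    by (intro holomorphic_on_divide holomorphic_on_mult) auto
  have "residue (\<lambda>z. metric_integrand X Y z - H2 z) (phi j) = 0"
  proof (rule residue_eq_0_if_bounded[OF e])
    show "(\<lambda>z. metric_integrand X Y z - H2 z) holomorphic_on (ball (phi j) e - {phi j})"
      using F H2 by (intro holomorphic_intros)
    fix z assume z: "z \<in> ball (phi j) e - {phi j}"
    then have "z \<in> Dreg" "z \<in> Di - Pol" using Dreg P by auto
    then show "norm (metric_integrand X Y z - H2 z) \<le> B"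
      using bound[OF z] by (simp add: metric_integrand_decomp[OF X Y] deriv_ell_Di H2_def)
  qed
  then show ?thesis
    using residue_add[of "ball (phi j) e" "phi j" "\<lambda>z. metric_integrand X Y z - H2 z" H2] F H2 e
    by (simp add: H2_def holomorphic_on_diff)
qed

lemma punctured_disk_subset:
  assumes U: "open U" "\<Gamma> \<subseteq> U" and j: "j \<in> {1..m}"
  obtains \<delta> where "\<delta> > 0" "ball (c j) (r j + \<delta>) - {phi j} \<subseteq> (U \<union> Di) - Pol"
proof -
  obtain \<delta> where \<delta>: "\<delta> > 0"
    "\<And>j z. j \<in> {1..m} \<Longrightarrow> r j - 2 * \<delta> \<le> dist (c j) z \<Longrightarrow> dist (c j) z \<le> r j + 2 * \<delta> \<Longrightarrow> z \<in> U"
    "\<And>i j z. i \<in> {1..m} \<Longrightarrow> j \<in> {1..m} \<Longrightarrow> i \<noteq> j \<Longrightarrow> dist (c j) z \<le> r j + 2 * \<delta> \<Longrightarrow> dist (c i) z > r i + 2 * \<delta>"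
    using thin_annuli[OF U] by metis
  have "z \<in> (U \<union> Di) - Pol" if z: "z \<in> ball (c j) (r j + \<delta>) - {phi j}" for z
  proof -
    have "z \<in> U \<union> Di"
    proof (cases "dist (c j) z < r j - 2 * \<delta>")
      case True
      then have "z \<in> ball (c j) (r j)" using \<delta>(1) by auto
      then show ?thesis using ball_subset_Di[OF j] by blast
    qed (use \<delta>(2)[OF j, of z] z \<delta>(1) in auto)
    moreover have "z \<notin> Pol"
    proof
      assume "z \<in> Pol"
      then obtain k where k: "k \<in> {1..m}" "z = phi k" by auto
      then have "k \<noteq> j" using z by auto
      then have "dist (c k) z > r k + 2 * \<delta>" using \<delta>(3)[OF k(1) j] z \<delta>(1) by auto
      then show False using phi_in[OF k(1)] k(2) \<delta>(1) by auto
    qed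
    ultimately show ?thesis by simp
  qed
  then show ?thesis using that \<delta>(1) by blast
qed

lemma residue_at_pole_conv_contour_integral:
  assumes X: "X \<in> \<H> \<times> \<H>" and Y: "Y \<in> \<H> \<times> \<H>" and j: "j \<in> {1..m}"
  shows "residue (\<lambda>z. \<beta> z * PP (pair_sum X) z * PP (pair_sum Y) z) (phi j)
           = (1 / (2 * pi * \<i>)) * contour_integral (circlepath (c j) (r j)) (\<lambda>z. \<beta> z * PP (pair_sum X) z * PP (pair_sum Y) z)"
proof -
  obtain W1 W2 where W: "open W1" "\<Gamma> \<subseteq> W1" "PP (pair_sum X) holomorphic_on (W1 \<union> Di)"
    "open W2" "\<Gamma> \<subseteq> W2" "PP (pair_sum Y) holomorphic_on (W2 \<union> Di)"
    using plus_minus_part_holomorphic_extensions[OF \<H>_pair_sum[OF \<alpha>_in_\<H> \<beta>_in_\<H> X]]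
      plus_minus_part_holomorphic_extensions[OF \<H>_pair_sum[OF \<alpha>_in_\<H> \<beta>_in_\<H> Y]] by metis
  define U where "U = U0 \<inter> W1 \<inter> W2"
  have U: "open U" "\<Gamma> \<subseteq> U" using U0 W by (auto simp: U_def)
  obtain \<delta> where \<delta>: "\<delta> > 0" "ball (c j) (r j + \<delta>) - {phi j} \<subseteq> (U \<union> Di) - Pol"
    using punctured_disk_subset[OF U j] by metis
  have "(\<lambda>z. \<beta> z * PP (pair_sum X) z * PP (pair_sum Y) z) holomorphic_on ((U \<union> Di) - Pol)"
    using \<beta>_holo W by (intro holomorphic_on_mult) (auto simp: U_def elim!: holomorphic_on_subset)
  then have "contour_integral (circlepath (c j) (r j)) (\<lambda>z. \<beta> z * PP (pair_sum X) z * PP (pair_sum Y) z)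
               = 2 * pi * \<i> * residue (\<lambda>z. \<beta> z * PP (pair_sum X) z * PP (pair_sum Y) z) (phi j)"
    using \<delta> phi_in[OF j] by (intro contour_integral_circlepath_residue) (auto elim: holomorphic_on_subset)
  then show ?thesis by simp
qed

lemma residue_metric_integrand_pole:
  assumes X: "X \<in> \<H> \<times> \<H>" and Y: "Y \<in> \<H> \<times> \<H>" and j: "j \<in> {1..m}"
  shows "residue (metric_integrand X Y) (phi j)
           = (1 / (2 * pi * \<i>)) * contour_integral (circlepath (c j) (r j)) (\<lambda>z. \<beta> z * PP (pair_sum X) z * PP (pair_sum Y) z)"
proof -
  obtain e where e: "e > 0" "ball (phi j) e \<subseteq> Di" using punctured_ball_at_pole[OF j] by metis
  have "residue (\<lambda>z. \<beta> z * cs X z * cs Y z) (phi j) = residue (\<lambda>z. \<beta> z * PP (pair_sum X) z * PP (pair_sum Y) z) (phi j)"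
    by (rule residue_cong)
       (use e in \<open>auto simp: eventually_at cs_def plus_part_Di dist_commute subset_iff intro!: exI[of _ e]\<close>)
  then show ?thesis
    using residue_metric_integrand_principal_pole[OF X Y j] residue_at_pole_conv_contour_integral[OF X Y j] by simp
qed

lemma circles_integral_dzeta:
  assumes X: "X \<in> \<H> \<times> \<H>" and Y: "Y \<in> \<H> \<times> \<H>"
  shows "(\<Sum>j\<in>{1..m}. contour_integral (circlepath (c j) (r j))
            (\<lambda>z. (fst (eta c r m a ah X) z - snd (eta c r m a ah X) z)
                 * (fst (eta c r m a ah Y) z - snd (eta c r m a ah Y) z) / deriv (\<lambda>z. a z - ah z) z))
         = circles_integral (\<lambda>z. (\<alpha> z - \<beta> z) * (NN (pair_sum X) z - fst X z) * (NN (pair_sum Y) z - fst Y z))"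
  unfolding circles_integral_def[symmetric]
proof (rule circles_integral_cong)
  fix z assume z: "z \<in> \<Gamma>"
  have "a field_differentiable at z" "ah field_differentiable at z"
    using a_holo ah_holo open_U0_Un_De open_U0_Un_Di z U0(2) \<Gamma>_subset_U0_Un_Di
    by (auto intro!: holomorphic_on_imp_differentiable_at)
  then have dz: "deriv (\<lambda>z. a z - ah z) z = \<alpha> z - \<beta> z" by simp
  have "fst (eta c r m a ah W) z - snd (eta c r m a ah W) z = (\<alpha> z - \<beta> z) * (NN (pair_sum W) z - fst W z)"
    if W: "W \<in> \<H> \<times> \<H>" for W
    unfolding fst_eta snd_eta plus_part_eq[OF \<H>_pair_sum[OF \<alpha>_in_\<H> \<beta>_in_\<H> W]]
      plus_part_eq[OF \<H>_pair_dot[OF \<alpha>_in_\<H> \<beta>_in_\<H> W]]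
    by (simp add: pair_sum_def pair_dot_def algebra_simps)
  then show "(fst (eta c r m a ah X) z - snd (eta c r m a ah X) z)
               * (fst (eta c r m a ah Y) z - snd (eta c r m a ah Y) z) / deriv (\<lambda>z. a z - ah z) z
             = (\<alpha> z - \<beta> z) * (NN (pair_sum X) z - fst X z) * (NN (pair_sum Y) z - fst Y z)"
    using X Y deriv_zeta_ne_0[OF z] unfolding dz by simp
qed

lemma metric_eta_eq_circles_integral:
  assumes X: "X \<in> \<H> \<times> \<H>" and Y: "Y \<in> \<H> \<times> \<H>"
  shows "metric_eta c r m a ah phi (eta c r m a ah X) (eta c r m a ah Y)
           = (1 / (2 * pi * \<i>)) * circles_integral (pair_sum (prodH c r m a ah X Y))"
proof -
  have sX: "pair_sum X \<in> \<H>" and sY: "pair_sum Y \<in> \<H>"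
    and tX: "pair_dot a ah X \<in> \<H>" and tY: "pair_dot a ah Y \<in> \<H>"
    using X Y \<H>_pair_sum[OF \<alpha>_in_\<H> \<beta>_in_\<H>] \<H>_pair_dot[OF \<alpha>_in_\<H> \<beta>_in_\<H>] by auto
  define f1 where "f1 = (\<lambda>z. (\<alpha> z - \<beta> z) * (NN (pair_sum X) z - fst X z) * (NN (pair_sum Y) z - fst Y z))"
  define f2 where "f2 = (\<lambda>z. \<alpha> z * NN (pair_sum X) z * NN (pair_sum Y) z)"
  define f3 where "f3 = (\<lambda>z. \<beta> z * PP (pair_sum X) z * PP (pair_sum Y) z)"
  define g where "g = (\<lambda>z. PP (pair_sum X) z * PP (pair_dot a ah Y) z + PP (pair_sum Y) z * PP (pair_dot a ah X) z
                       - NN (pair_sum Y) z * NN (pair_dot a ah X) z - NN (pair_sum X) z * NN (pair_dot a ah Y) z)"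
  have cont: "continuous_on \<Gamma> f1" "continuous_on \<Gamma> f2" "continuous_on \<Gamma> f3" "continuous_on \<Gamma> g"
    unfolding f1_def f2_def f3_def g_def using X Y sX sY tX tY \<alpha>_in_\<H> \<beta>_in_\<H>
    by (auto intro!: continuous_on_\<Gamma>_if_\<H> \<H>_mult \<H>_diff \<H>_add \<H>_minus_part \<H>_plus_part)
  have "circles_integral g = 0"
    unfolding g_def using sX sY tX tY
    by (simp add: circles_integral_lincomb[of _ _ 1 1, simplified] circles_integral_lincomb[of _ _ 1 "-1", simplified]
        circles_integral_mult_plus_parts circles_integral_mult_minus_parts continuous_on_\<Gamma>_if_\<H>
        \<H>_mult \<H>_plus_part \<H>_minus_part \<H>_add \<H>_diff)
  moreover have "pair_sum (prodH c r m a ah X Y) = (\<lambda>z. f2 z - f1 z - f3 z + g z)"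
    using pair_sum_prodH[OF \<alpha>_in_\<H> \<beta>_in_\<H> X Y] by (auto simp: f1_def f2_def f3_def g_def algebra_simps)
  ultimately have I: "circles_integral (pair_sum (prodH c r m a ah X Y))
                        = circles_integral f2 - circles_integral f1 - circles_integral f3"
    using cont by (simp add: circles_integral_lincomb[of _ _ 1 1, simplified]
        circles_integral_lincomb[of _ _ 1 "-1", simplified] continuous_intros)
  have R: "(\<Sum>j\<in>{1..m}. residue (metric_integrand X Y) (phi j)) = (1 / (2 * pi * \<i>)) * circles_integral f3"
    unfolding circles_integral_def sum_distrib_left f3_def
    using residue_metric_integrand_pole[OF X Y] by (intro sum.cong) auto
  have F: "(\<lambda>z. (PP (fst (eta c r m a ah X)) z + NN (snd (eta c r m a ah X)) z)
              * (PP (fst (eta c r m a ah Y)) z + NN (snd (eta c r m a ah Y)) z)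
              / deriv (\<lambda>z. PP a z + NN ah z) z) = metric_integrand X Y"
    by (simp add: metric_integrand_def dell_def ell_def)
  show ?thesis
    unfolding metric_eta_def Let_def circles_integral_dzeta[OF X Y, folded f1_def] F R I
      residue_inf_metric_integrand[OF X Y, folded f2_def]
    by (simp add: algebra_simps)
qed

end

lemma germ_eq2_refl: "germ_eq2 c r m X X"
  by (auto simp: germ_eq2_def germ_eq_def intro!: exI[of _ UNIV])

lemma M_point_if_inM:
  assumes D: "disks c r m" and n: "\<forall>j\<in>{0..m}. n j > 0" and d: "\<forall>j\<in>{1..m}. d j \<noteq> 0"
    and M: "inM c r m n d a ah phi"
  obtains U where "M_point c r m a ah phi n U"
proof -
  interpret disks c r m by (fact D)
  obtain U where U: "open U" "\<Gamma> \<subseteq> U" "a holomorphic_on (U \<union> De)" "ah holomorphic_on ((U \<union> Di) - phi ` {1..m})"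
    and growth: "\<exists>C. eventually (\<lambda>z. norm (a z - z ^ n 0) \<le> C * norm z powr (real (n 0) - 2)) at_infinity"
    and phi_in: "\<forall>j\<in>{1..m}. phi j \<in> ball (c j) (r j)"
    and pole: "\<forall>j\<in>{1..m}. \<exists>L. L \<noteq> 0 \<and> ((\<lambda>z. (z - phi j) ^ n j * ah z) \<longlongrightarrow> L) (at (phi j))"
    and zeta: "\<forall>j\<in>{1..m}. \<exists>w V. open V \<and> sphere (c j) (r j) \<subseteq> V \<and> w holomorphic_on V \<and>
                 (\<forall>z\<in>V. deriv w z \<noteq> 0 \<and> w z \<noteq> 0 \<and> a z - ah z = w z powi d j) \<and>
                 winding_number (w \<circ> circlepath (c j) (r j)) 0 = 1"
    using M unfolding inM_def by (elim conjE exE) blast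
  have "deriv a z - deriv ah z \<noteq> 0" if z: "z \<in> \<Gamma>" for z
  proof -
    obtain j where j: "j \<in> {1..m}" "z \<in> sphere (c j) (r j)" using z unfolding circles_def by blast
    obtain w V where "open V" "sphere (c j) (r j) \<subseteq> V" "w holomorphic_on V"
      "\<forall>z\<in>V. deriv w z \<noteq> 0 \<and> w z \<noteq> 0 \<and> a z - ah z = w z powi d j"
      using bspec[OF zeta j(1)] by blast
    then have "deriv (\<lambda>z. a z - ah z) z \<noteq> 0"
      using d j by (intro deriv_ne_0_if_powi[of V]) auto
    moreover have zU: "z \<in> U - phi ` {1..m}"
      using z U(2) phi_in ball_subset_Di \<Gamma>_Int_Di by blast
    have "open (U \<union> De)" "open ((U \<union> Di) - phi ` {1..m})"
      using U(1) open_De open_Di by (auto intro!: open_Diff finite_imp_closed)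
    then have "a field_differentiable at z" "ah field_differentiable at z"
      using U(3,4) zU by (auto intro!: holomorphic_on_imp_differentiable_at)
    ultimately show ?thesis by simp
  qed
  moreover have "n 0 \<ge> 1" "\<forall>j\<in>{1..m}. n j \<ge> 1" using n by (auto simp: Suc_le_eq)
  ultimately show ?thesis
    using U growth phi_in pole by (intro that M_point.intro[OF D] M_point_axioms.intro) auto
qed

theorem proposition2p7:
  fixes m :: nat and n :: "nat \<Rightarrow> nat" and d :: "nat \<Rightarrow> int"
    and c :: "nat \<Rightarrow> complex" and r :: "nat \<Rightarrow> real"
    and a ah :: "complex \<Rightarrow> complex" and phi :: "nat \<Rightarrow> complex"
    and w1 wh1 w2 wh2 w3 wh3 :: "complex \<Rightarrow> complex"
  assumes "m \<ge> 1"
    and "\<forall>j\<in>{0..m}. n j > 0"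
    and "\<forall>j\<in>{1..m}. d j \<noteq> 0"
    and "\<forall>j\<in>{1..m}. r j > 0"
    and "\<forall>i\<in>{1..m}. \<forall>j\<in>{1..m}. i \<noteq> j \<longrightarrow> cball (c i) (r i) \<inter> cball (c j) (r j) = {}"
    and "inM c r m n d a ah phi"
    and "{w1, wh1, w2, wh2, w3, wh3} \<subseteq> Hgerm c r m"
  shows "germ_eq2 c r m
           (eta c r m a ah (prodH c r m a ah (w1, wh1) (w2, wh2)))
           (eta c r m a ah (prodH c r m a ah (w2, wh2) (w1, wh1)))
       \<and> germ_eq2 c r m
           (eta c r m a ah (prodH c r m a ah (prodH c r m a ah (w1, wh1) (w2, wh2)) (w3, wh3)))
           (eta c r m a ah (prodH c r m a ah (w1, wh1) (prodH c r m a ah (w2, wh2) (w3, wh3))))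
       \<and> metric_eta c r m a ah phi
           (eta c r m a ah (prodH c r m a ah (w1, wh1) (w2, wh2))) (eta c r m a ah (w3, wh3))
         = metric_eta c r m a ah phi
           (eta c r m a ah (w1, wh1)) (eta c r m a ah (prodH c r m a ah (w2, wh2) (w3, wh3)))"
proof -
  interpret disks c r m
    using assms(4,5) by unfold_locales auto
  obtain U where "M_point c r m a ah phi n U"
    using M_point_if_inM[OF disks_axioms assms(2,3,6)] by metis
  then interpret M_point c r m a ah phi n U .
  have X: "(w1, wh1) \<in> \<H> \<times> \<H>" "(w2, wh2) \<in> \<H> \<times> \<H>" "(w3, wh3) \<in> \<H> \<times> \<H>"
    using assms(7) by auto
  have XY: "prodH c r m a ah (w1, wh1) (w2, wh2) \<in> \<H> \<times> \<H>"
    and YZ: "prodH c r m a ah (w2, wh2) (w3, wh3) \<in> \<H> \<times> \<H>"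
    using prodH_in_\<H>2[OF \<alpha>_in_\<H> \<beta>_in_\<H>] X by auto
  show ?thesis
    by (simp add: germ_eq2_refl metric_eta_eq_circles_integral[OF XY X(3)] metric_eta_eq_circles_integral[OF X(1) YZ]
        prodH_assoc[OF \<alpha>_in_\<H> \<beta>_in_\<H> X] prodH_commute[OF \<alpha>_in_\<H> \<beta>_in_\<H> X(2,1)])
qed

end
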